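(* In $\Gamma_\mathbb{F}(\mathbb{A})$, let $\alpha$ be a non-degenerate primitive path which is not orthogonal. Then there exists a line $N$ admissible for $\alpha$ such that the orthogonal shift $\beta=\sigma^N_\perp(\alpha)$ has line-invariant $\ell(\beta)\neq-1$.
   Context: $\mathbb{H}$, $\mathbb{O}$ are the real quaternions and octonions, $\mathbb{C}\subset\mathbb{H}\subset\mathbb{O}$. Let $(\mathbb{F},\mathbb{A})$ be $(\mathbb{R},\mathbb{H})$ or $(\mathbb{C},\mathbb{O})$; $\mathbb{A},\mathbb{O}$ are right $\mathbb{F}$-vector spaces via right multiplication by $\mathbb{F}$. $(x|y)_\mathbb{R}=\mathrm{Re}(\bar xy)$; $(x|y)=(x|y)_\mathbb{R}$ if $\mathbb{F}=\mathbb{R}$, and for $\mathbb{F}=\mathbb{C}$, $(x|y)$ is the $\mathbb{C}$-component of $\bar xy$ in $\mathbb{O}=\mathbb{C}\oplus\mathbb{C}^{\perp}$. $x\perp y$ means $(x|y)=0$; for points $[x]\perp[y]$ means $x\perp y$. $\mathrm{Pu}_\mathbb{F}(\mathbb{B})$ is the real-orthogonal complement of $\mathbb{F}$ in $\mathbb{B}$. Sharp $\mathbb{F}$-morphisms $\mathbb{A}\to\mathbb{O}$: $\mathbb{F}$-linear multiplicative maps preserving $(\cdot|\cdot)$. $\Gamma_\mathbb{F}(\mathbb{A})$: points are 1-dim $\mathbb{F}$-subspaces $[x]$ of $\mathrm{Pu}_\mathbb{F}(\mathbb{A})$; lines are $[x,u]=\{(xt,ut):t\in\mathbb{F}^*\}$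 with $x\in\mathrm{Pu}_\mathbb{F}(\mathbb{A})$, $u\in\mathrm{Pu}_\mathbb{F}(\mathbb{O})$, $|x|=|u|\ne0$; planes are sharp $\mathbb{F}$-morphisms $\phi:\mathbb{A}\to\mathbb{O}$; every point is incident with every plane, $[y]$ is incident with $[x,u]$ iff $(x|y)=0$, $[x,u]$ is incident with $\phi$ iff $\phi(x)=u$. A primitive path is a closed path $(p,L,q,M,p)$ ($p,q$ points, $L,M$ lines), degenerate if $p=q$ or $L=M$, orthogonal if $p\perp q$. In a primitive path $L$ and $M$ have the same point set, so one may write $L=[a,u]$, $M=[a,v]$ with the same $a$; the line-invariant is $\ell(\alpha)=(L|M):=(u|v)/(|u||v|)\in\mathbb{F}$ (independent of the choice of $a$). For non-degenerate $\alpha=(p,L,q,M,p)$, a line $N$ is admissible if it is incident with $q$ and coplanar with both $L$ and $M$; for a point $r$ of $N$, with $\xi$ the plane on $N,L$, $\chi$ the plane on $N,M$, $L'$ the line of $\xi$ through $p,r$, $M'$ the line of $\chi$ through $p,r$, the shift is $\sigma^N_{q\to r}(\alpha)=(p,L',r,M',p)$. The orthogonal shift $\sigma^N_\perp(\alpha)$ is the shift $\sigma^N_{q\to r}(\alpha)$ where $r$ is the unique point of $N$ with $p\perp r$. *)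

theory Defs
  imports "HOL-Analysis.Analysis"
begin

text \<open>Cayley--Dickson product: (a,b)(c,d) = (ac - conj(d) b, d a + b conj(c)),
  conjugate (a,b)* = (conj a, -b).  Norm, addition and real scaling are the
  componentwise (Euclidean) ones from Product_Vector.\<close>

type_synonym quat = "complex \<times> complex"
type_synonym oct = "quat \<times> quat"

definition qconj :: "quat \<Rightarrow> quat" where
  "qconj x = (cnj (fst x), - snd x)"

definition qmul :: "quat \<Rightarrow> quat \<Rightarrow> quat" where
  "qmul x y = (fst x * fst y - cnj (snd y) * snd x, snd y * fst x + snd x * cnj (fst y))"

definition oconj :: "oct \<Rightarrow> oct" where
  "oconj x = (qconj (fst x), - snd x)"

definition omul :: "oct \<Rightarrow> oct \<Rightarrow> oct" where
  "omul x y = (qmul (fst x) (fst y) - qmul (qconj (snd y)) (snd x),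
               qmul (snd y) (fst x) + qmul (snd x) (qconj (fst y)))"

definition oRe :: "oct \<Rightarrow> real" where
  "oRe x = Re (fst (fst x))"

definition ofC :: "complex \<Rightarrow> oct" where
  "ofC z = ((z, 0), (0, 0))"

definition ofR :: "real \<Rightarrow> oct" where
  "ofR r = ofC (complex_of_real r)"

definition Hset :: "oct set" where
  "Hset = {(q, 0) | q. True}"

section \<open>The two cases (F,A) = (R,H) or (C,O)\<close>

datatype FA = RH | CO

definition Fsc :: "FA \<Rightarrow> oct set" where
  "Fsc c = (case c of RH \<Rightarrow> range ofR | CO \<Rightarrow> range ofC)"

definition Aset :: "FA \<Rightarrow> oct set" where
  "Aset c = (case c of RH \<Rightarrow> Hset | CO \<Rightarrow> UNIV)"

text \<open>The F-valued form (x|y): Re(conj x y) if F = R; the C-component of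
  conj x y in O = C \<oplus> C^perp if F = C.  Values are taken inside O (in F).\<close>
definition ip :: "FA \<Rightarrow> oct \<Rightarrow> oct \<Rightarrow> oct" where
  "ip c x y = (case c of
      RH \<Rightarrow> ofR (oRe (omul (oconj x) y))
    | CO \<Rightarrow> ofC (fst (fst (omul (oconj x) y))))"

definition Pu :: "FA \<Rightarrow> oct set \<Rightarrow> oct set" where
  "Pu c B = {x \<in> B. \<forall>t \<in> Fsc c. oRe (omul (oconj t) x) = 0}"

text \<open>Sharp F-morphisms A \<rightarrow> O (as functions on O, vanishing off A).\<close>
definition sharp :: "FA \<Rightarrow> (oct \<Rightarrow> oct) \<Rightarrow> bool" where
  "sharp c \<phi> \<longleftrightarrow>
     (\<forall>x \<in> Aset c. \<forall>y \<in> Aset c. \<phi> (x + y) = \<phi> x + \<phi> y) \<and>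
     (\<forall>x \<in> Aset c. \<forall>t \<in> Fsc c. \<phi> (omul x t) = omul (\<phi> x) t) \<and>
     (\<forall>x \<in> Aset c. \<forall>y \<in> Aset c. \<phi> (omul x y) = omul (\<phi> x) (\<phi> y)) \<and>
     (\<forall>x \<in> Aset c. \<forall>y \<in> Aset c. ip c (\<phi> x) (\<phi> y) = ip c x y) \<and>
     (\<forall>x. x \<notin> Aset c \<longrightarrow> \<phi> x = 0)"

definition pt :: "FA \<Rightarrow> oct \<Rightarrow> oct set" where
  "pt c y = {omul y t | t. t \<in> Fsc c}"

definition line :: "FA \<Rightarrow> oct \<Rightarrow> oct \<Rightarrow> (oct \<times> oct) set" where
  "line c x u = {(omul x t, omul u t) | t. t \<in> Fsc c \<and> t \<noteq> 0}"

definition is_point :: "FA \<Rightarrow> oct set \<Rightarrow> bool" where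
  "is_point c P \<longleftrightarrow> (\<exists>y \<in> Pu c (Aset c). y \<noteq> 0 \<and> P = pt c y)"

definition is_line :: "FA \<Rightarrow> (oct \<times> oct) set \<Rightarrow> bool" where
  "is_line c L \<longleftrightarrow> (\<exists>x u. x \<in> Pu c (Aset c) \<and> u \<in> Pu c UNIV \<and>
       norm x = norm u \<and> x \<noteq> 0 \<and> L = line c x u)"

definition inc_pl :: "FA \<Rightarrow> oct set \<Rightarrow> (oct \<times> oct) set \<Rightarrow> bool" where
  "inc_pl c P L \<longleftrightarrow> is_point c P \<and> is_line c L \<and>
     (\<exists>x u y. L = line c x u \<and> P = pt c y \<and> ip c x y = 0)"

definition inc_lp :: "FA \<Rightarrow> (oct \<times> oct) set \<Rightarrow> (oct \<Rightarrow> oct) \<Rightarrow> bool" where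
  "inc_lp c L \<phi> \<longleftrightarrow> is_line c L \<and> sharp c \<phi> \<and>
     (\<exists>x u. L = line c x u \<and> \<phi> x = u)"

definition perp :: "FA \<Rightarrow> oct set \<Rightarrow> oct set \<Rightarrow> bool" where
  "perp c P Q \<longleftrightarrow> (\<exists>x y. P = pt c x \<and> Q = pt c y \<and> ip c x y = 0)"

definition primitive :: "FA \<Rightarrow> oct set \<Rightarrow> (oct \<times> oct) set \<Rightarrow> oct set \<Rightarrow> (oct \<times> oct) set \<Rightarrow> bool" where
  "primitive c p L q M \<longleftrightarrow> is_point c p \<and> is_point c q \<and> is_line c L \<and> is_line c M \<and>
     inc_pl c p L \<and> inc_pl c q L \<and> inc_pl c q M \<and> inc_pl c p M"

definition degenerate :: "oct set \<Rightarrow> (oct \<times> oct) set \<Rightarrow> oct set \<Rightarrow> (oct \<times> oct) set \<Rightarrow> bool" where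
  "degenerate p L q M \<longleftrightarrow> p = q \<or> L = M"

definition linv :: "FA \<Rightarrow> (oct \<times> oct) set \<Rightarrow> (oct \<times> oct) set \<Rightarrow> oct" where
  "linv c L M = (SOME l. \<exists>a u v. L = line c a u \<and> M = line c a v \<and>
       l = scaleR (1 / (norm u * norm v)) (ip c u v))"

definition coplanar :: "FA \<Rightarrow> (oct \<times> oct) set \<Rightarrow> (oct \<times> oct) set \<Rightarrow> bool" where
  "coplanar c N L \<longleftrightarrow> (\<exists>\<phi>. inc_lp c N \<phi> \<and> inc_lp c L \<phi>)"

definition admissible :: "FA \<Rightarrow> oct set \<Rightarrow> (oct \<times> oct) set \<Rightarrow> oct set \<Rightarrow> (oct \<times> oct) set
    \<Rightarrow> (oct \<times> oct) set \<Rightarrow> bool" where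
  "admissible c p L q M N \<longleftrightarrow> is_line c N \<and> inc_pl c q N \<and> coplanar c N L \<and> coplanar c N M"

text \<open>Shift sigma^N_{q \<rightarrow> r}(p,L,q,M,p) = (p,L',r,M',p); returned as (L', r, M').\<close>
definition shift :: "FA \<Rightarrow> oct set \<Rightarrow> (oct \<times> oct) set \<Rightarrow> oct set \<Rightarrow> (oct \<times> oct) set
    \<Rightarrow> (oct \<times> oct) set \<Rightarrow> oct set \<Rightarrow> (oct \<times> oct) set \<times> oct set \<times> (oct \<times> oct) set" where
  "shift c p L q M N r =
    (let xi = (THE xi. inc_lp c N xi \<and> inc_lp c L xi);
         ch = (THE ch. inc_lp c N ch \<and> inc_lp c M ch);
         L' = (THE L'. inc_lp c L' xi \<and> inc_pl c p L' \<and> inc_pl c r L');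
         M' = (THE M'. inc_lp c M' ch \<and> inc_pl c p M' \<and> inc_pl c r M')
     in (L', r, M'))"

definition orth_shift :: "FA \<Rightarrow> oct set \<Rightarrow> (oct \<times> oct) set \<Rightarrow> oct set \<Rightarrow> (oct \<times> oct) set
    \<Rightarrow> (oct \<times> oct) set \<Rightarrow> (oct \<times> oct) set \<times> oct set \<times> (oct \<times> oct) set" where
  "orth_shift c p L q M N = shift c p L q M N (THE r. inc_pl c r N \<and> perp c p r)"

end

theory Submission
  imports Defs
begin

text \<open>
  Write \<open>p = [p0]\<close> and \<open>q = [q0]\<close>. As Pu(A) has F-dimension three and \<open>p \<noteq> q\<close>, the elements
  of Pu(A) orthogonal to \<open>p0\<close> and \<open>q0\<close> form a single F-line \<open>[a]\<close>, so \<open>L = [a, u]\<close> and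
  \<open>M = [a, v]\<close>. Let \<open>b\<close> be the component of \<open>p0\<close> orthogonal to \<open>q0\<close> and \<open>e\<close> that of \<open>q0\<close>
  orthogonal to \<open>p0\<close>; as \<open>p\<close> and \<open>q\<close> are not orthogonal, \<open>(b|e) \<noteq> 0\<close>.
  Choose \<open>w \<in> Pu(O)\<close> orthogonal to \<open>u\<close> and \<open>v\<close> with \<open>|w| = |b|\<close>. A sharp morphism is
  freely and uniquely determined by its values on the orthogonal pair \<open>a, b\<close>, so there are
  unique planes \<open>\<xi>\<close>, \<open>\<psi>\<close> mapping \<open>(a, b)\<close> to \<open>(u, w)\<close> and to \<open>(v, w)\<close>. The line
  \<open>N = [b, w]\<close> through \<open>q\<close> lies in both, its point orthogonal to \<open>p\<close> is \<open>[a]\<close>, and the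
  orthogonal shift has lines \<open>L' = [e, \<xi> e]\<close> and \<open>M' = [e, \<psi> e]\<close>. If their invariant were
  \<open>-1\<close>, then \<open>\<psi> e = - \<xi> e\<close> and \<open>(b|e) = (w|\<xi> e) = (w|\<psi> e) = - (b|e)\<close>.
\<close>

section \<open>Octonion arithmetic in coordinates\<close>

lemma oct_cases: obtains a0 a1 a2 a3 where "x = ((a0, a1), (a2, a3))"
  by (metis prod.collapse)

lemma omul_coords: "omul ((a0, a1), (a2, a3)) ((b0, b1), (b2, b3)) =
  ((a0*b0 - cnj b1*a1 - cnj b2*a2 - cnj a3*b3, b1*a0 + a1*cnj b0 - a3*cnj b2 + b3*cnj a2),
   (b2*a0 - cnj a1*b3 + a2*cnj b0 + cnj b1*a3, a1*b2 + b3*cnj a0 - b1*a2 + a3*b0))"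
  by (simp add: omul_def qmul_def qconj_def algebra_simps)

lemma oconj_coords: "oconj ((a0, a1), (a2, a3)) = ((cnj a0, -a1), (-a2, -a3))"
  by (simp add: oconj_def qconj_def)

lemma zero_oct_coords: "(0::oct) = ((0, 0), (0, 0))"
  by (simp add: zero_prod_def)

lemma norm_oct_sq_coords:
  "complex_of_real ((norm (((a0, a1), (a2, a3))::oct))\<^sup>2) = a0*cnj a0 + a1*cnj a1 + a2*cnj a2 + a3*cnj a3"
  by (simp add: norm_Pair flip: complex_norm_square)

lemma norm_oct_sq_Re_Im: "(norm (((a0, a1), (a2, a3))::oct))\<^sup>2 =
  (Re a0)\<^sup>2 + (Im a0)\<^sup>2 + (Re a1)\<^sup>2 + (Im a1)\<^sup>2 + (Re a2)\<^sup>2 + (Im a2)\<^sup>2 + (Re a3)\<^sup>2 + (Im a3)\<^sup>2"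
  by (simp add: norm_Pair cmod_def)

lemma inner_oct_coords:
  "inner (((a0, a1), (a2, a3))::oct) ((b0, b1), (b2, b3)) = Re (cnj a0*b0 + cnj a1*b1 + cnj a2*b2 + cnj a3*b3)"
  by (simp add: inner_complex_def)

lemma norm_omul: "norm (omul x y) = norm x * norm y"
proof -
  obtain a0 a1 a2 a3 where x: "x = ((a0, a1), (a2, a3))" by (rule oct_cases)
  obtain b0 b1 b2 b3 where y: "y = ((b0, b1), (b2, b3))" by (rule oct_cases)
  have "complex_of_real ((norm (omul x y))\<^sup>2) = complex_of_real ((norm x)\<^sup>2) * complex_of_real ((norm y)\<^sup>2)"
    unfolding x y omul_coords norm_oct_sq_coords by (simp add: algebra_simps)
  then have "(norm (omul x y))\<^sup>2 = (norm x * norm y)\<^sup>2"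
    by (metis of_real_eq_iff of_real_mult power_mult_distrib)
  then show ?thesis by simp
qed

lemma omul_alternative_left: "omul x (omul x y) = omul (omul x x) y"
  by (cases x; cases y) (auto simp: omul_def qmul_def qconj_def algebra_simps)

lemma omul_alternative_right: "omul (omul y x) x = omul y (omul x x)"
  by (cases x; cases y) (auto simp: omul_def qmul_def qconj_def algebra_simps)

lemma omul_add_left: "omul (x + y) z = omul x z + omul y z"
  by (cases x rule: oct_cases; cases y rule: oct_cases; cases z rule: oct_cases)
     (simp add: omul_coords algebra_simps)

lemma omul_add_right: "omul z (x + y) = omul z x + omul z y"
  by (cases x rule: oct_cases; cases y rule: oct_cases; cases z rule: oct_cases)
     (simp add: omul_coords algebra_simps)

lemma omul_minus_left: "omul (- x) z = - omul x z"
  by (cases x rule: oct_cases; cases z rule: oct_cases) (simp add: omul_coords algebra_simps)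

lemma omul_minus_right: "omul z (- x) = - omul z x"
  by (cases x rule: oct_cases; cases z rule: oct_cases) (simp add: omul_coords algebra_simps)

lemma omul_diff_right: "omul z (x - y) = omul z x - omul z y"
  by (metis diff_conv_add_uminus omul_add_right omul_minus_right)

lemma ofC_inject [simp]: "ofC x = ofC y \<longleftrightarrow> x = y"
  by (simp add: ofC_def)

lemma ofC_eq_0_iff [simp]: "ofC z = 0 \<longleftrightarrow> z = 0"
  by (simp add: ofC_def zero_oct_coords)

lemma ofC_0 [simp]: "ofC 0 = 0"
  by simp

lemma ofC_add: "ofC (a + b) = ofC a + ofC b"
  by (simp add: ofC_def)

lemma omul_ofC_ofC: "omul (ofC a) (ofC b) = ofC (a * b)"
  by (simp add: ofC_def omul_coords)

lemma scaleR_ofC: "scaleR r (ofC w) = ofC (of_real r * w)"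
  by (simp add: ofC_def scaleR_conv_of_real)

definition cscale :: "oct \<Rightarrow> complex \<Rightarrow> oct" where
  "cscale x z = omul x (ofC z)"

lemma cscale_coords: "cscale ((a0, a1), (a2, a3)) z = ((a0*z, a1*cnj z), (a2*cnj z, a3*z))"
  by (simp add: cscale_def ofC_def omul_coords)

lemma cscale_cscale: "cscale (cscale x t) s = cscale x (t * s)"
  by (cases x rule: oct_cases) (simp add: cscale_coords algebra_simps)

lemma cscale_add_left: "cscale (x + y) t = cscale x t + cscale y t"
  by (cases x rule: oct_cases; cases y rule: oct_cases) (simp add: cscale_coords algebra_simps)

lemma cscale_add_right: "cscale x (t + s) = cscale x t + cscale x s"
  by (cases x rule: oct_cases) (simp add: cscale_coords algebra_simps)

lemma cscale_one [simp]: "cscale x 1 = x"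
  by (cases x rule: oct_cases) (simp add: cscale_coords)

lemma cscale_zero_right [simp]: "cscale x 0 = 0"
  by (cases x rule: oct_cases) (simp add: cscale_coords zero_oct_coords)

lemma cscale_minus_left: "cscale (- x) t = - cscale x t"
  by (cases x rule: oct_cases) (simp add: cscale_coords)

lemma cscale_minus_right: "cscale x (- t) = - cscale x t"
  by (cases x rule: oct_cases) (simp add: cscale_coords)

lemma cscale_ofC: "cscale (ofC a) t = ofC (a * t)"
  by (simp add: cscale_coords ofC_def)

lemma ofC_eq_cscale_one: "ofC t = cscale (ofC 1) t"
  by (simp add: cscale_ofC)

lemma scaleR_eq_cscale: "scaleR r x = cscale x (of_real r)"
  by (cases x rule: oct_cases) (simp add: cscale_coords scaleR_conv_of_real mult.commute)

lemma norm_cscale: "norm (cscale x t) = norm x * cmod t"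
proof -
  obtain a0 a1 a2 a3 where x: "x = ((a0, a1), (a2, a3))" by (rule oct_cases)
  have "(norm (cscale x t))\<^sup>2 = (norm x * cmod t)\<^sup>2"
    unfolding x cscale_coords norm_oct_sq_Re_Im power_mult_distrib cmod_power2
    by (simp add: algebra_simps power2_eq_square)
  then show ?thesis by simp
qed

lemma cscale_eq_0_iff [simp]: "cscale x t = 0 \<longleftrightarrow> x = 0 \<or> t = 0"
  by (metis mult_eq_0_iff norm_cscale norm_eq_zero)

lemma cscale_left_cancel: "x \<noteq> 0 \<Longrightarrow> cscale x t = cscale x s \<Longrightarrow> t = s"
  using cscale_add_right[of x t "- s"] by (simp add: cscale_minus_right)

lemma omul_real_left: "omul (cscale x (of_real r)) y = cscale (omul x y) (of_real r)"
  by (cases x rule: oct_cases; cases y rule: oct_cases) (simp add: omul_coords cscale_coords algebra_simps)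

lemma omul_real_right: "omul y (cscale x (of_real r)) = cscale (omul y x) (of_real r)"
  by (cases x rule: oct_cases; cases y rule: oct_cases) (simp add: omul_coords cscale_coords algebra_simps)

lemma omul_ofC_left: "fst (fst x) = 0 \<or> Im t = 0 \<Longrightarrow> omul (ofC t) x = cscale x (cnj t)"
  by (cases x rule: oct_cases) (auto simp: ofC_def omul_coords cscale_coords complex_eq_iff)

lemma omul_self_Re_0: "Re (fst (fst x)) = 0 \<Longrightarrow> omul x x = ofC (- of_real ((norm x)\<^sup>2))"
proof (cases x rule: oct_cases)
  case (1 a0 a1 a2 a3)
  assume "Re (fst (fst x)) = 0"
  then have "cnj a0 = - a0" using 1 by (simp add: complex_eq_iff)
  then show ?thesis unfolding 1 omul_coords ofC_def norm_oct_sq_coords by (simp add: algebra_simps)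
qed

lemma omul_anticommute_Re_0: "Re (fst (fst x)) = 0 \<Longrightarrow> Re (fst (fst y)) = 0 \<Longrightarrow>
   omul x y + omul y x = ofC (of_real (-2 * inner x y))"
  by (cases x rule: oct_cases; cases y rule: oct_cases)
     (simp add: omul_coords ofC_def complex_eq_iff inner_complex_def algebra_simps)

section \<open>The scalar field, pure elements and the hermitian form\<close>

text \<open>Elements of F are represented by complex numbers: \<open>scalar c z\<close> says that
  \<open>ofC z\<close> lies in F.\<close>

definition scalar :: "FA \<Rightarrow> complex \<Rightarrow> bool" where
  "scalar c z \<longleftrightarrow> c = CO \<or> Im z = 0"

definition pure :: "FA \<Rightarrow> oct \<Rightarrow> bool" where
  "pure c x \<longleftrightarrow> (case c of RH \<Rightarrow> Re (fst (fst x)) = 0 | CO \<Rightarrow> fst (fst x) = 0)"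

definition herm :: "FA \<Rightarrow> oct \<Rightarrow> oct \<Rightarrow> complex" where
  "herm c x y = (case c of
      RH \<Rightarrow> of_real (Re (fst (fst (omul (oconj x) y))))
    | CO \<Rightarrow> fst (fst (omul (oconj x) y)))"

abbreviation PuA :: "FA \<Rightarrow> oct set" where
  "PuA c \<equiv> Pu c (Aset c)"

lemma Fsc_eq: "Fsc c = ofC ` {z. scalar c z}"
proof (cases c)
  case RH
  have "range ofR = ofC ` {z. Im z = 0}"
    by (auto simp: ofR_def image_def) (metis complex_is_Real_iff Reals_cases)
  then show ?thesis using RH by (simp add: Fsc_def scalar_def)
qed (simp add: Fsc_def scalar_def)

lemma ofC_in_Fsc_iff: "ofC t \<in> Fsc c \<longleftrightarrow> scalar c t"
  by (simp add: Fsc_eq image_iff)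

lemma scalar_of_real [simp]: "scalar c (of_real r)"
  and scalar_1 [simp]: "scalar c 1"
  by (simp_all add: scalar_def)

lemma scalar_add: "scalar c a \<Longrightarrow> scalar c b \<Longrightarrow> scalar c (a + b)"
  and scalar_diff: "scalar c a \<Longrightarrow> scalar c b \<Longrightarrow> scalar c (a - b)"
  and scalar_minus: "scalar c a \<Longrightarrow> scalar c (- a)"
  and scalar_mult: "scalar c a \<Longrightarrow> scalar c b \<Longrightarrow> scalar c (a * b)"
  and scalar_divide: "scalar c a \<Longrightarrow> scalar c b \<Longrightarrow> scalar c (a / b)"
  and scalar_cnj: "scalar c a \<Longrightarrow> scalar c (cnj a)"
  by (auto simp: scalar_def Im_divide)

lemma scalar_RH_E:
  assumes "scalar RH t" obtains r where "t = of_real r"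
  using assms that[of "Re t"] by (simp add: scalar_def complex_eq_iff)

lemma ip_eq_ofC_herm: "ip c x y = ofC (herm c x y)"
  by (cases c) (simp_all add: ip_def herm_def ofR_def oRe_def)

lemma Pu_eq: "Pu c B = {x \<in> B. pure c x}"
proof -
  have Re_ofC: "oRe (omul (oconj (ofC z)) x) = Re (cnj z * fst (fst x))" for z x
    by (cases x rule: oct_cases) (simp add: oRe_def ofC_def omul_coords oconj_coords)
  have RH_case: "(\<forall>t::complex. Im t = 0 \<longrightarrow> Re t = 0) \<longleftrightarrow> False"
    by (auto intro: exI[of _ 1])
  have CO_case: "(\<forall>t::complex. Re t * a + Im t * b = 0) \<longleftrightarrow> a = 0 \<and> b = 0" for a b :: real
    by (auto dest: spec[of _ 1] spec[of _ \<i>])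
  show ?thesis
    by (cases c) (simp_all add: Pu_def pure_def Fsc_eq scalar_def Re_ofC RH_case CO_case complex_eq_iff)
qed

lemma in_Pu_UNIV_iff: "x \<in> Pu c UNIV \<longleftrightarrow> pure c x"
  by (simp add: Pu_eq)

lemma in_PuA_iff: "x \<in> PuA c \<longleftrightarrow> x \<in> Aset c \<and> pure c x"
  by (simp add: Pu_eq)

lemma Aset_coords: "((a0, a1), (a2, a3)) \<in> Aset c \<longleftrightarrow> c = CO \<or> (a2 = 0 \<and> a3 = 0)"
  by (cases c) (auto simp: Aset_def Hset_def zero_prod_def)

lemma Aset_add: "x \<in> Aset c \<Longrightarrow> y \<in> Aset c \<Longrightarrow> x + y \<in> Aset c"
  and Aset_diff: "x \<in> Aset c \<Longrightarrow> y \<in> Aset c \<Longrightarrow> x - y \<in> Aset c"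
  and Aset_omul: "x \<in> Aset c \<Longrightarrow> y \<in> Aset c \<Longrightarrow> omul x y \<in> Aset c"
  by (cases x rule: oct_cases; cases y rule: oct_cases; auto simp: Aset_coords omul_coords)+

lemma Aset_cscale: "x \<in> Aset c \<Longrightarrow> cscale x t \<in> Aset c"
  by (cases x rule: oct_cases) (auto simp: Aset_coords cscale_coords)

lemma Aset_ofC: "ofC t \<in> Aset c"
  by (simp add: Aset_coords ofC_def)

lemma Aset_0: "0 \<in> Aset c"
  by (simp add: Aset_coords zero_oct_coords)

lemma pure_0 [simp]: "pure c 0"
  and pure_add: "pure c x \<Longrightarrow> pure c y \<Longrightarrow> pure c (x + y)"
  and pure_diff: "pure c x \<Longrightarrow> pure c y \<Longrightarrow> pure c (x - y)"
  and pure_Re_0: "pure c x \<Longrightarrow> Re (fst (fst x)) = 0"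
  by (cases c; simp add: pure_def)+

lemma pure_cscale: "pure c x \<Longrightarrow> scalar c t \<Longrightarrow> pure c (cscale x t)"
  by (cases x rule: oct_cases; cases c) (auto simp: pure_def cscale_coords scalar_def)

lemma PuA_diff_cscale: "x \<in> PuA c \<Longrightarrow> y \<in> PuA c \<Longrightarrow> scalar c t \<Longrightarrow> x - cscale y t \<in> PuA c"
  by (simp add: in_PuA_iff Aset_diff Aset_cscale pure_diff pure_cscale)

lemma subspace_PuA: "subspace (PuA c)"
  unfolding subspace_def
  by (auto simp: in_PuA_iff scaleR_eq_cscale Aset_0 Aset_add Aset_cscale pure_add pure_cscale)

lemma herm_coords: "herm c ((a0, a1), (a2, a3)) ((b0, b1), (b2, b3)) =
  (case c of
     RH \<Rightarrow> of_real (Re (cnj a0*b0 + a1*cnj b1 + a2*cnj b2 + cnj a3*b3))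
   | CO \<Rightarrow> cnj a0*b0 + a1*cnj b1 + a2*cnj b2 + cnj a3*b3)"
proof -
  have "fst (fst (omul (oconj ((a0, a1), (a2, a3))) ((b0, b1), (b2, b3)))) =
      cnj a0*b0 + a1*cnj b1 + a2*cnj b2 + cnj a3*b3"
    by (simp add: omul_coords oconj_coords)
  then show ?thesis by (simp only: herm_def)
qed

lemma herm_add_right: "herm c x (y + z) = herm c x y + herm c x z"
  by (cases x rule: oct_cases; cases y rule: oct_cases; cases z rule: oct_cases; cases c)
     (simp_all add: herm_coords algebra_simps)

lemma herm_add_left: "herm c (x + y) z = herm c x z + herm c y z"
  by (cases x rule: oct_cases; cases y rule: oct_cases; cases z rule: oct_cases; cases c)
     (simp_all add: herm_coords algebra_simps)

lemma herm_minus_right: "herm c x (- y) = - herm c x y"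
  by (cases x rule: oct_cases; cases y rule: oct_cases; cases c) (simp_all add: herm_coords)

lemma herm_minus_left: "herm c (- x) y = - herm c x y"
  by (cases x rule: oct_cases; cases y rule: oct_cases; cases c) (simp_all add: herm_coords)

lemma herm_diff_right: "herm c x (y - z) = herm c x y - herm c x z"
  by (metis diff_conv_add_uminus herm_add_right herm_minus_right)

lemma herm_diff_left: "herm c (x - y) z = herm c x z - herm c y z"
  by (metis diff_conv_add_uminus herm_add_left herm_minus_left)

lemma herm_cscale_right: "scalar c t \<Longrightarrow> herm c x (cscale y t) = herm c x y * t"
  by (cases x rule: oct_cases; cases y rule: oct_cases; cases c)
     (auto elim!: scalar_RH_E simp: herm_coords cscale_coords algebra_simps)

lemma herm_cscale_left: "scalar c t \<Longrightarrow> herm c (cscale x t) y = cnj t * herm c x y"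
  by (cases x rule: oct_cases; cases y rule: oct_cases; cases c)
     (auto elim!: scalar_RH_E simp: herm_coords cscale_coords algebra_simps)

lemma herm_commute: "herm c y x = cnj (herm c x y)"
  by (cases x rule: oct_cases; cases y rule: oct_cases; cases c) (simp_all add: herm_coords algebra_simps)

lemma herm_eq_0_commute: "herm c x y = 0 \<Longrightarrow> herm c y x = 0"
  by (metis complex_cnj_zero herm_commute)

lemma herm_self: "herm c x x = of_real ((norm x)\<^sup>2)"
proof (cases x rule: oct_cases)
  case (1 a0 a1 a2 a3)
  show ?thesis unfolding 1 herm_coords norm_oct_sq_coords
    by (cases c) (simp_all add: complex_eq_iff algebra_simps)
qed

lemma herm_self_eq_0_iff [simp]: "herm c x x = 0 \<longleftrightarrow> x = 0"
  by (simp add: herm_self)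

lemma Re_herm: "Re (herm c x y) = inner x y"
  by (cases x rule: oct_cases; cases y rule: oct_cases; cases c)
     (simp_all add: herm_coords inner_oct_coords inner_complex_def algebra_simps)

lemma scalar_herm: "scalar c (herm c x y)"
  by (cases c) (simp_all add: scalar_def herm_def)

lemma herm_eq_0_if_inner: "inner x y = 0 \<Longrightarrow> inner (cscale x \<i>) y = 0 \<Longrightarrow> herm c x y = 0"
  by (cases x rule: oct_cases; cases y rule: oct_cases; cases c)
     (auto simp: herm_coords cscale_coords inner_oct_coords inner_complex_def complex_eq_iff algebra_simps)

lemma herm_ofC_one: "herm c (ofC 1) (ofC t) = t" if "scalar c t"
  using that by (cases c) (auto simp: herm_coords ofC_def scalar_def complex_eq_iff)

lemma herm_pure_ofC: "pure c x \<Longrightarrow> scalar c t \<Longrightarrow> herm c x (ofC t) = 0"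
  by (cases x rule: oct_cases; cases c) (auto simp: herm_coords ofC_def pure_def scalar_def)

lemma herm_ofC_pure: "pure c x \<Longrightarrow> scalar c t \<Longrightarrow> herm c (ofC t) x = 0"
  by (metis herm_eq_0_commute herm_pure_ofC)

lemma pure_minus_F_part: "pure c (x - ofC (herm c (ofC 1) x))"
  by (cases x rule: oct_cases; cases c) (auto simp: herm_coords ofC_def pure_def)

section \<open>Pu(A) has F-dimension three\<close>

lemma orthogonal_family_complete:
  fixes f :: "nat \<Rightarrow> 'a::euclidean_space"
  assumes "subspace V" "n = dim V" "\<And>i. i < n \<Longrightarrow> f i \<in> V" "\<And>i. i < n \<Longrightarrow> f i \<noteq> 0"
    and orth: "\<And>i j. i < n \<Longrightarrow> j < n \<Longrightarrow> i \<noteq> j \<Longrightarrow> inner (f i) (f j) = 0"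
    and "y \<in> V" "\<And>i. i < n \<Longrightarrow> inner (f i) y = 0"
  shows "y = 0"
proof -
  define S where "S = f ` {..<n}"
  have "inj_on f {..<n}"
    by (rule inj_onI) (metis assms(4) inner_eq_zero_iff lessThan_iff orth)
  then have card: "card S = dim V" using assms(2) by (simp add: S_def card_image)
  have "pairwise orthogonal S" "0 \<notin> S"
    using assms(4) orth by (auto simp: S_def pairwise_def orthogonal_def)
  then have "independent S" by (rule pairwise_orthogonal_independent)
  moreover have "S \<subseteq> V" using assms(3) by (auto simp: S_def)
  ultimately have "V \<subseteq> span S" using card_eq_dim[of S V] card by (simp add: S_def)
  then have "y \<in> span S" using assms(6) by blast
  then have "orthogonal y y"
    by (rule orthogonal_to_span) (use assms(7) in \<open>auto simp: S_def orthogonal_def inner_commute\<close>)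
  then show ?thesis by (simp add: orthogonal_def)
qed

lemma dim_PuA: "dim (PuA c) = (case c of RH \<Rightarrow> 3 | CO \<Rightarrow> 6)"
proof -
  define B :: "oct set" where "B = (case c of
      RH \<Rightarrow> {((\<i>, 0), (0, 0)), ((0, 1), (0, 0)), ((0, \<i>), (0, 0))}
    | CO \<Rightarrow> {((0, 1), (0, 0)), ((0, \<i>), (0, 0)), ((0, 0), (1, 0)), ((0, 0), (\<i>, 0)),
            ((0, 0), (0, 1)), ((0, 0), (0, \<i>))})"
  have "pairwise orthogonal B" "0 \<notin> B"
    by (cases c; auto simp: B_def pairwise_def orthogonal_def inner_complex_def zero_prod_def)+
  then have indep: "independent B" by (rule pairwise_orthogonal_independent)
  have "B \<subseteq> PuA c" by (cases c) (auto simp: B_def in_PuA_iff Aset_coords pure_def)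
  then have "span B \<subseteq> PuA c" using subspace_PuA span_minimal by blast
  moreover have "x \<in> span B" if x: "x \<in> PuA c" for x
  proof -
    obtain a0 a1 a2 a3 where xe: "x = ((a0, a1), (a2, a3))" by (rule oct_cases)
    show ?thesis
    proof (cases c)
      case RH
      with x xe have "a2 = 0" "a3 = 0" "Re a0 = 0" by (auto simp: in_PuA_iff Aset_coords pure_def)
      then have "x = Im a0 *\<^sub>R ((\<i>, 0), (0, 0)) + Re a1 *\<^sub>R ((0, 1), (0, 0)) + Im a1 *\<^sub>R ((0, \<i>), (0, 0))"
        using xe by (simp add: complex_eq_iff)
      also have "\<dots> \<in> span B"
        unfolding B_def RH FA.case by (intro span_add span_scale span_base) auto
      finally show ?thesis .
    next
      case CO
      with x xe have "a0 = 0" by (auto simp: in_PuA_iff Aset_coords pure_def)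
      then have "x = Re a1 *\<^sub>R ((0, 1), (0, 0)) + Im a1 *\<^sub>R ((0, \<i>), (0, 0)) + Re a2 *\<^sub>R ((0, 0), (1, 0))
          + Im a2 *\<^sub>R ((0, 0), (\<i>, 0)) + Re a3 *\<^sub>R ((0, 0), (0, 1)) + Im a3 *\<^sub>R ((0, 0), (0, \<i>))"
        using xe by (simp add: complex_eq_iff)
      also have "\<dots> \<in> span B"
        unfolding B_def CO FA.case by (intro span_add span_scale span_base) auto
      finally show ?thesis .
    qed
  qed
  ultimately have "PuA c = span B" by blast
  then show ?thesis using dim_span_eq_card_independent[OF indep] by (cases c) (simp_all add: B_def)
qed

lemma less3_cases: "i < (3::nat) \<longleftrightarrow> i = 0 \<or> i = 1 \<or> i = 2"
  by auto

lemma less6_cases: "i < (6::nat) \<longleftrightarrow> i = 0 \<or> i = 1 \<or> i = 2 \<or> i = 3 \<or> i = 4 \<or> i = 5"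
  by auto

text \<open>For F = C the real orthogonal family is \<open>e1, e1 \<i>, e2, e2 \<i>, e3, e3 \<i>\<close>.\<close>
lemma PuA_orthogonal_frame_complete:
  assumes in_PuA: "e1 \<in> PuA c" "e2 \<in> PuA c" "e3 \<in> PuA c" and nz: "e1 \<noteq> 0" "e2 \<noteq> 0" "e3 \<noteq> 0"
    and orth: "herm c e1 e2 = 0" "herm c e1 e3 = 0" "herm c e2 e3 = 0"
    and y: "y \<in> PuA c" and orth_y: "herm c e1 y = 0" "herm c e2 y = 0" "herm c e3 y = 0"
  shows "y = 0"
proof -
  have orth': "herm c e2 e1 = 0" "herm c e3 e1 = 0" "herm c e3 e2 = 0"
    using orth by (simp_all add: herm_eq_0_commute)
  have inner_herm: "inner x z = Re (herm c x z)" for x z by (simp add: Re_herm)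
  show ?thesis
  proof (cases c)
    case RH
    define f where "f i = [e1, e2, e3] ! i" for i
    show ?thesis
    proof (rule orthogonal_family_complete[of "PuA c" 3 f])
      show "3 = dim (PuA c)" using RH by (simp add: dim_PuA)
    qed (use in_PuA nz orth orth' y orth_y in \<open>auto simp: f_def less3_cases subspace_PuA inner_herm\<close>)
  next
    case CO
    define f where "f i = [e1, cscale e1 \<i>, e2, cscale e2 \<i>, e3, cscale e3 \<i>] ! i" for i
    have i: "scalar c \<i>" using CO by (simp add: scalar_def)
    show ?thesis
    proof (rule orthogonal_family_complete[of "PuA c" 6 f])
      show "6 = dim (PuA c)" using CO by (simp add: dim_PuA)
    qed (use in_PuA nz orth orth' y orth_y i in
      \<open>auto simp: f_def less6_cases subspace_PuA inner_herm herm_cscale_left herm_cscale_right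
        herm_self in_PuA_iff Aset_cscale pure_cscale\<close>)
  qed
qed

definition rejection :: "FA \<Rightarrow> oct \<Rightarrow> oct \<Rightarrow> oct" where
  "rejection c x y = y - cscale x (herm c x y / herm c x x)"

lemma scalar_herm_quotient: "scalar c (herm c x y / herm c x x)"
  by (simp add: scalar_divide scalar_herm)

lemma herm_rejection_self: "x \<noteq> 0 \<Longrightarrow> herm c x (rejection c x y) = 0"
  by (simp add: rejection_def herm_diff_right herm_cscale_right scalar_herm_quotient)

lemma herm_rejection: "herm c z x = 0 \<Longrightarrow> herm c z y = 0 \<Longrightarrow> herm c z (rejection c x y) = 0"
  by (simp add: rejection_def herm_diff_right herm_cscale_right scalar_herm_quotient)

lemma rejection_in_PuA: "x \<in> PuA c \<Longrightarrow> y \<in> PuA c \<Longrightarrow> rejection c x y \<in> PuA c"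
  unfolding rejection_def by (rule PuA_diff_cscale) (simp_all add: scalar_herm_quotient)

lemma rejection_eq_0_imp: "rejection c x y = 0 \<Longrightarrow> \<exists>t. scalar c t \<and> y = cscale x t"
  unfolding rejection_def using scalar_herm_quotient by (metis eq_iff_diff_eq_0)

lemma PuA_orthogonal_to_two_multiple:
  assumes "e1 \<in> PuA c" "e2 \<in> PuA c" "e3 \<in> PuA c" "e1 \<noteq> 0" "e2 \<noteq> 0" "e3 \<noteq> 0"
    and "herm c e1 e2 = 0" "herm c e1 e3 = 0" "herm c e2 e3 = 0"
    and "y \<in> PuA c" "herm c e2 y = 0" "herm c e3 y = 0"
  obtains t where "scalar c t" "y = cscale e1 t"
proof -
  have "rejection c e1 y = 0"
  proof (rule PuA_orthogonal_frame_complete[OF assms(1-9)])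
    show "rejection c e1 y \<in> PuA c" using assms(1,10) by (rule rejection_in_PuA)
    show "herm c e1 (rejection c e1 y) = 0" using assms(4) by (rule herm_rejection_self)
    show "herm c e2 (rejection c e1 y) = 0" "herm c e3 (rejection c e1 y) = 0"
      using assms(7,8,11,12) by (simp_all add: herm_rejection herm_eq_0_commute)
  qed
  then show ?thesis using rejection_eq_0_imp that by blast
qed

section \<open>Orthogonal frames and sharp morphisms\<close>

lemma omul_ofC_pure: "pure c x \<Longrightarrow> scalar c t \<Longrightarrow> omul (ofC t) x = cscale x (cnj t)"
  by (rule omul_ofC_left) (cases c; auto simp: pure_def scalar_def)

lemma omul_cscale_orthogonal:
  assumes "pure c e" "pure c f" "herm c e f = 0" "scalar c t" "scalar c s"
  shows "omul (cscale e t) (cscale f s) = cscale (omul e f) (cnj t * cnj s)"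
proof (cases c)
  case RH
  with assms(4,5) obtain r r' where "t = of_real r" "s = of_real r'" by (metis scalar_RH_E)
  then show ?thesis by (simp add: omul_real_left omul_real_right cscale_cscale mult.commute)
next
  case CO
  obtain a0 a1 a2 a3 where e: "e = ((a0, a1), (a2, a3))" by (rule oct_cases)
  obtain b0 b1 b2 b3 where f: "f = ((b0, b1), (b2, b3))" by (rule oct_cases)
  have h0: "a0 = 0" "b0 = 0" using assms(1,2) CO e f by (simp_all add: pure_def)
  have h1: "a1*cnj b1 + a2*cnj b2 + cnj a3 * b3 = 0" using assms(3) CO e f h0 by (simp add: herm_coords)
  have h2: "cnj a1* b1 + cnj a2* b2 + a3 * cnj b3 = 0" using arg_cong[OF h1, of cnj] by simp
  show ?thesis unfolding e f using h0 h1 h2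
    by (simp add: cscale_coords omul_coords, intro conjI; simp add: algebra_simps; algebra)
qed

lemma omul_cscale_same:
  assumes "pure c e" "scalar c t" "scalar c s"
  shows "omul (cscale e t) (cscale e s) = cscale (omul e e) (cnj t * s)"
proof (cases c)
  case RH
  with assms(2,3) obtain r r' where "t = of_real r" "s = of_real r'" by (metis scalar_RH_E)
  then show ?thesis by (simp add: omul_real_left omul_real_right cscale_cscale mult.commute)
next
  case CO
  obtain a0 a1 a2 a3 where e: "e = ((a0, a1), (a2, a3))" by (rule oct_cases)
  have "a0 = 0" using assms(1) CO e by (simp add: pure_def)
  then show ?thesis unfolding e by (simp add: cscale_coords omul_coords algebra_simps)
qed

lemma pure_omul: "pure c a \<Longrightarrow> pure c b \<Longrightarrow> herm c a b = 0 \<Longrightarrow> pure c (omul a b)"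
  by (cases a rule: oct_cases; cases b rule: oct_cases; cases c)
     (auto simp: pure_def herm_coords omul_coords complex_eq_iff algebra_simps)

lemma herm_omul_left_factor: "pure c a \<Longrightarrow> pure c b \<Longrightarrow> herm c a (omul a b) = 0"
  by (cases a rule: oct_cases; cases b rule: oct_cases; cases c)
     (auto simp: pure_def herm_coords omul_coords complex_eq_iff algebra_simps)

lemma herm_omul_right_factor: "pure c a \<Longrightarrow> pure c b \<Longrightarrow> herm c b (omul a b) = 0"
  by (cases a rule: oct_cases; cases b rule: oct_cases; cases c)
     (auto simp: pure_def herm_coords omul_coords complex_eq_iff algebra_simps)

text \<open>An orthogonal pair \<open>f1, f2\<close> of pure elements spans, together with \<open>1\<close> and \<open>f1 f2\<close>,
  all of A over F; the multiplication table of this frame depends only on \<open>|f1|\<close> and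
  \<open>|f2|\<close>.  Hence a sharp morphism is determined by the images of \<open>f1, f2\<close>, and any
  orthogonal pure pair of the same lengths is such an image.\<close>

definition frame_comb :: "oct \<Rightarrow> oct \<Rightarrow> complex \<times> complex \<times> complex \<times> complex \<Rightarrow> oct" where
  "frame_comb f1 f2 \<tau> = (case \<tau> of (t0, t1, t2, t3) \<Rightarrow>
     ofC t0 + cscale f1 t1 + cscale f2 t2 + cscale (omul f1 f2) t3)"

definition scalar4 :: "FA \<Rightarrow> complex \<times> complex \<times> complex \<times> complex \<Rightarrow> bool" where
  "scalar4 c \<tau> \<longleftrightarrow> (case \<tau> of (t0, t1, t2, t3) \<Rightarrow> scalar c t0 \<and> scalar c t1 \<and> scalar c t2 \<and> scalar c t3)"

text \<open>Coordinates of a product in the frame \<open>1, f1, f2, f1 f2\<close>, where \<open>n1 = |f1|\<^sup>2\<close>, \<open>n2 = |f2|\<^sup>2\<close>.\<close>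
definition frame_prod :: "complex \<Rightarrow> complex \<Rightarrow> complex \<times> complex \<times> complex \<times> complex
    \<Rightarrow> complex \<times> complex \<times> complex \<times> complex \<Rightarrow> complex \<times> complex \<times> complex \<times> complex" where
  "frame_prod n1 n2 \<tau> \<sigma> = (case \<tau> of (t0, t1, t2, t3) \<Rightarrow> case \<sigma> of (s0, s1, s2, s3) \<Rightarrow>
     (t0 * s0 - n1 * cnj t1 * s1 - n2 * cnj t2 * s2 - n1 * n2 * cnj t3 * s3,
      cnj t0 * s1 + t1 * s0 + n2 * (cnj t2 * cnj s3 - cnj t3 * cnj s2),
      cnj t0 * s2 + t2 * s0 + n1 * (cnj t3 * cnj s1 - cnj t1 * cnj s3),
      cnj t0 * s3 + t3 * s0 + cnj t1 * cnj s2 - cnj t2 * cnj s1))"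

definition frame_coords :: "FA \<Rightarrow> oct \<Rightarrow> oct \<Rightarrow> oct \<Rightarrow> complex \<times> complex \<times> complex \<times> complex" where
  "frame_coords c a b y = (herm c (ofC 1) y, herm c a y / herm c a a, herm c b y / herm c b b,
      herm c (omul a b) y / (herm c a a * herm c b b))"

lemma frame_comb_add: "frame_comb f1 f2 \<tau> + frame_comb f1 f2 \<sigma> = frame_comb f1 f2 (\<tau> + \<sigma>)"
  by (cases \<tau>; cases \<sigma>) (simp add: frame_comb_def ofC_add cscale_add_right algebra_simps)

lemma frame_comb_cscale:
  "cscale (frame_comb f1 f2 (t0, t1, t2, t3)) z = frame_comb f1 f2 (t0*z, t1*z, t2*z, t3*z)"
  by (simp add: frame_comb_def cscale_add_left cscale_ofC cscale_cscale)

lemma Aset_frame_comb: "f1 \<in> Aset c \<Longrightarrow> f2 \<in> Aset c \<Longrightarrow> frame_comb f1 f2 \<tau> \<in> Aset c"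
  by (cases \<tau>) (auto simp: frame_comb_def Aset_add Aset_ofC Aset_cscale Aset_omul)

lemma scalar4_frame_prod:
  "scalar4 c \<tau> \<Longrightarrow> scalar4 c \<sigma> \<Longrightarrow> scalar c n1 \<Longrightarrow> scalar c n2 \<Longrightarrow> scalar4 c (frame_prod n1 n2 \<tau> \<sigma>)"
  by (cases \<tau>; cases \<sigma>)
     (auto simp: scalar4_def frame_prod_def intro!: scalar_add scalar_mult scalar_cnj scalar_diff scalar_minus)

lemma scalar4_frame_coords: "scalar4 c (frame_coords c a b y)"
  by (simp add: scalar4_def frame_coords_def scalar_herm scalar_divide scalar_mult)

lemma frame_coords_add: "frame_coords c a b (x + y) = frame_coords c a b x + frame_coords c a b y"
  by (simp add: frame_coords_def herm_add_right add_divide_distrib)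

lemma frame_coords_cscale: "scalar c t \<Longrightarrow>
    frame_coords c a b (cscale x t) = (case frame_coords c a b x of (t0, t1, t2, t3) \<Rightarrow> (t0*t, t1*t, t2*t, t3*t))"
  by (simp add: frame_coords_def herm_cscale_right)

lemma frame_orthogonality:
  assumes "pure c f1" "pure c f2" "herm c f1 f2 = 0"
  shows "pure c (omul f1 f2)" "herm c f2 f1 = 0" "herm c f1 (omul f1 f2) = 0" "herm c (omul f1 f2) f1 = 0"
    "herm c f2 (omul f1 f2) = 0" "herm c (omul f1 f2) f2 = 0"
  using pure_omul[OF assms] assms(3) herm_omul_left_factor[OF assms(1,2)] herm_omul_right_factor[OF assms(1,2)]
  by (simp_all add: herm_eq_0_commute)

lemma frame_table:
  assumes Q1: "pure c f1" and Q2: "pure c f2" and o: "herm c f1 f2 = 0"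
  defines "f3 \<equiv> omul f1 f2" and "n1 \<equiv> complex_of_real ((norm f1)\<^sup>2)" and "n2 \<equiv> complex_of_real ((norm f2)\<^sup>2)"
  shows "omul f1 f1 = ofC (- n1)" "omul f2 f2 = ofC (- n2)" "omul f3 f3 = ofC (- (n1 * n2))"
    "omul f2 f1 = - f3" "omul f1 f3 = cscale f2 (- n1)" "omul f3 f1 = cscale f2 n1"
    "omul f2 f3 = cscale f1 n2" "omul f3 f2 = cscale f1 (- n2)"
proof -
  have p1: "Re (fst (fst f1)) = 0" and p2: "Re (fst (fst f2)) = 0" and p3: "Re (fst (fst f3)) = 0"
    using Q1 Q2 frame_orthogonality(1)[OF Q1 Q2 o] by (simp_all add: pure_Re_0 f3_def)
  show T11: "omul f1 f1 = ofC (- n1)" using omul_self_Re_0[OF p1] n1_def by simp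
  show T22: "omul f2 f2 = ofC (- n2)" using omul_self_Re_0[OF p2] n2_def by simp
  show "omul f3 f3 = ofC (- (n1 * n2))"
    using omul_self_Re_0[OF p3] by (simp add: n1_def n2_def f3_def norm_omul power_mult_distrib)
  have "inner f1 f2 = 0" using o Re_herm[of c f1 f2] by simp
  then show T21: "omul f2 f1 = - f3" using omul_anticommute_Re_0[OF p1 p2] f3_def
    by (simp add: eq_neg_iff_add_eq_0 add.commute)
  have s1: "omul (ofC (- n1)) f2 = cscale f2 (- n1)" using omul_ofC_left[of f2 "- n1"] by (simp add: n1_def)
  have s2: "omul (ofC (- n2)) f1 = cscale f1 (- n2)" using omul_ofC_left[of f1 "- n2"] by (simp add: n2_def)
  show "omul f1 f3 = cscale f2 (- n1)" unfolding f3_def omul_alternative_left T11 s1 ..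
  have "omul f3 f1 = - omul f2 (omul f1 f1)" using T21 by (metis minus_minus omul_minus_left omul_alternative_right)
  then show "omul f3 f1 = cscale f2 n1" by (simp add: T11 cscale_def [symmetric] cscale_minus_right)
  have "omul f2 f3 = - omul (omul f2 f2) f1" using T21 by (metis minus_minus omul_minus_right omul_alternative_left)
  then show "omul f2 f3 = cscale f1 n2" by (simp add: T22 s2 cscale_minus_right)
  show "omul f3 f2 = cscale f1 (- n2)" unfolding f3_def omul_alternative_right T22 cscale_def ..
qed

lemma frame_comb_omul:
  assumes Q1: "pure c f1" and Q2: "pure c f2" and o: "herm c f1 f2 = 0"
    and Ft: "scalar4 c \<tau>" and Fs: "scalar4 c \<sigma>"
  shows "omul (frame_comb f1 f2 \<tau>) (frame_comb f1 f2 \<sigma>) =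
     frame_comb f1 f2 (frame_prod (of_real ((norm f1)\<^sup>2)) (of_real ((norm f2)\<^sup>2)) \<tau> \<sigma>)"
proof -
  obtain t0 t1 t2 t3 s0 s1 s2 s3 where \<tau>\<sigma>: "\<tau> = (t0, t1, t2, t3)" "\<sigma> = (s0, s1, s2, s3)"
    by (metis prod.collapse)
  define f3 where "f3 = omul f1 f2"
  define n1 where "n1 = complex_of_real ((norm f1)\<^sup>2)"
  define n2 where "n2 = complex_of_real ((norm f2)\<^sup>2)"
  note orth = frame_orthogonality[OF Q1 Q2 o, folded f3_def]
  note tb = frame_table[OF Q1 Q2 o, folded f3_def n1_def n2_def]
  have ft: "scalar c t0" "scalar c t1" "scalar c t2" "scalar c t3"
    and fs: "scalar c s0" "scalar c s1" "scalar c s2" "scalar c s3"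
    using Ft Fs by (simp_all add: scalar4_def \<tau>\<sigma>)
  have scalar_left: "omul (ofC a) (cscale f b) = cscale f (cnj a * b)"
    if "pure c f" "scalar c a" "scalar c b" for f a b
    using that by (metis omul_ofC_pure pure_cscale cscale_cscale mult.commute)
  have scalar_right: "omul (cscale f a) (ofC b) = cscale f (a * b)" for f a b
    by (simp add: cscale_def [symmetric] cscale_cscale)
  have products:
    "omul (ofC t0) (ofC s0) = ofC (t0 * s0)"
    "omul (ofC t0) (cscale f1 s1) = cscale f1 (cnj t0 * s1)"
    "omul (ofC t0) (cscale f2 s2) = cscale f2 (cnj t0 * s2)"
    "omul (ofC t0) (cscale f3 s3) = cscale f3 (cnj t0 * s3)"
    "omul (cscale f1 t1) (ofC s0) = cscale f1 (t1 * s0)"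
    "omul (cscale f2 t2) (ofC s0) = cscale f2 (t2 * s0)"
    "omul (cscale f3 t3) (ofC s0) = cscale f3 (t3 * s0)"
    "omul (cscale f1 t1) (cscale f1 s1) = ofC (- n1 * (cnj t1 * s1))"
    "omul (cscale f2 t2) (cscale f2 s2) = ofC (- n2 * (cnj t2 * s2))"
    "omul (cscale f3 t3) (cscale f3 s3) = ofC (- (n1 * n2) * (cnj t3 * s3))"
    "omul (cscale f1 t1) (cscale f2 s2) = cscale f3 (cnj t1 * cnj s2)"
    "omul (cscale f2 t2) (cscale f1 s1) = cscale f3 (- (cnj t2 * cnj s1))"
    "omul (cscale f1 t1) (cscale f3 s3) = cscale f2 (- n1 * (cnj t1 * cnj s3))"
    "omul (cscale f3 t3) (cscale f1 s1) = cscale f2 (n1 * (cnj t3 * cnj s1))"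
    "omul (cscale f2 t2) (cscale f3 s3) = cscale f1 (n2 * (cnj t2 * cnj s3))"
    "omul (cscale f3 t3) (cscale f2 s2) = cscale f1 (- n2 * (cnj t3 * cnj s2))"
    using scalar_left[OF Q1] scalar_left[OF Q2] scalar_left[OF orth(1)] scalar_right ft fs
      omul_cscale_same[OF Q1 ft(2) fs(2)] omul_cscale_same[OF Q2 ft(3) fs(3)]
      omul_cscale_same[OF orth(1) ft(4) fs(4)]
      omul_cscale_orthogonal[OF Q1 Q2 o ft(2) fs(3)] omul_cscale_orthogonal[OF Q2 Q1 orth(2) ft(3) fs(2)]
      omul_cscale_orthogonal[OF Q1 orth(1) orth(3) ft(2) fs(4)]
      omul_cscale_orthogonal[OF orth(1) Q1 orth(4) ft(4) fs(2)]
      omul_cscale_orthogonal[OF Q2 orth(1) orth(5) ft(3) fs(4)]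
      omul_cscale_orthogonal[OF orth(1) Q2 orth(6) ft(4) fs(3)]
    by (simp_all add: omul_ofC_ofC tb cscale_ofC cscale_cscale cscale_minus_left cscale_minus_right f3_def [symmetric])
  have basis: "ofC a = frame_comb f1 f2 (a, 0, 0, 0)" "cscale f1 a = frame_comb f1 f2 (0, a, 0, 0)"
    "cscale f2 a = frame_comb f1 f2 (0, 0, a, 0)" "cscale f3 a = frame_comb f1 f2 (0, 0, 0, a)" for a
    by (simp_all add: frame_comb_def f3_def)
  have "omul (frame_comb f1 f2 \<tau>) (frame_comb f1 f2 \<sigma>) =
    omul (ofC t0 + cscale f1 t1 + cscale f2 t2 + cscale f3 t3) (ofC s0 + cscale f1 s1 + cscale f2 s2 + cscale f3 s3)"
    by (simp add: frame_comb_def f3_def \<tau>\<sigma>)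
  also have "\<dots> = frame_comb f1 f2 (frame_prod n1 n2 \<tau> \<sigma>)"
    unfolding omul_add_left omul_add_right products unfolding basis frame_comb_add
    by (rule arg_cong[where f="frame_comb f1 f2"]) (simp add: frame_prod_def \<tau>\<sigma> algebra_simps)
  finally show ?thesis unfolding n1_def n2_def .
qed

lemma herm_frame_comb_right:
  assumes Q1: "pure c f1" and Q2: "pure c f2" and o: "herm c f1 f2 = 0" and F: "scalar4 c (t0, t1, t2, t3)"
  shows "herm c (ofC 1) (frame_comb f1 f2 (t0, t1, t2, t3)) = t0"
    "herm c f1 (frame_comb f1 f2 (t0, t1, t2, t3)) = herm c f1 f1 * t1"
    "herm c f2 (frame_comb f1 f2 (t0, t1, t2, t3)) = herm c f2 f2 * t2"
    "herm c (omul f1 f2) (frame_comb f1 f2 (t0, t1, t2, t3)) = herm c f1 f1 * herm c f2 f2 * t3"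
proof -
  note orth = frame_orthogonality[OF Q1 Q2 o]
  have ft: "scalar c t0" "scalar c t1" "scalar c t2" "scalar c t3" using F by (simp_all add: scalar4_def)
  have z1: "herm c (ofC 1) f = 0" if "pure c f" for f using herm_ofC_pure[OF that, of 1] by simp
  have z2: "herm c f (ofC t0) = 0" if "pure c f" for f using herm_pure_ofC[OF that ft(1)] .
  show "herm c (ofC 1) (frame_comb f1 f2 (t0, t1, t2, t3)) = t0"
    by (simp add: frame_comb_def herm_add_right herm_cscale_right ft herm_ofC_one z1 Q1 Q2 orth(1))
  show "herm c f1 (frame_comb f1 f2 (t0, t1, t2, t3)) = herm c f1 f1 * t1"
    by (simp add: frame_comb_def herm_add_right herm_cscale_right ft z2 Q1 o orth(3))
  show "herm c f2 (frame_comb f1 f2 (t0, t1, t2, t3)) = herm c f2 f2 * t2"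
    by (simp add: frame_comb_def herm_add_right herm_cscale_right ft z2 Q2 orth(2,5))
  show "herm c (omul f1 f2) (frame_comb f1 f2 (t0, t1, t2, t3)) = herm c f1 f1 * herm c f2 f2 * t3"
    by (simp add: frame_comb_def herm_add_right herm_cscale_right ft z2 orth(1,4,6) herm_self
        norm_omul power_mult_distrib)
qed

lemma herm_frame_comb:
  assumes "pure c f1" "pure c f2" "herm c f1 f2 = 0" "scalar4 c (t0, t1, t2, t3)" "scalar4 c (s0, s1, s2, s3)"
  shows "herm c (frame_comb f1 f2 (t0, t1, t2, t3)) (frame_comb f1 f2 (s0, s1, s2, s3)) =
     cnj t0 * s0 + cnj t1 * (herm c f1 f1 * s1) + cnj t2 * (herm c f2 f2 * s2)
      + cnj t3 * (herm c f1 f1 * herm c f2 f2 * s3)"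
proof -
  have ft: "scalar c t0" "scalar c t1" "scalar c t2" "scalar c t3" using assms(4) by (simp_all add: scalar4_def)
  have "herm c (frame_comb f1 f2 (t0, t1, t2, t3)) y = cnj t0 * herm c (ofC 1) y + cnj t1 * herm c f1 y
      + cnj t2 * herm c f2 y + cnj t3 * herm c (omul f1 f2) y" for y
    by (simp add: frame_comb_def herm_add_left herm_cscale_left ft ofC_eq_cscale_one[of t0])
  then show ?thesis by (simp add: herm_frame_comb_right[OF assms(1-3,5)])
qed

lemma frame_coords_frame_comb:
  assumes "pure c a" "pure c b" "herm c a b = 0" "a \<noteq> 0" "b \<noteq> 0" "scalar4 c \<tau>"
  shows "frame_coords c a b (frame_comb a b \<tau>) = \<tau>"
  using assms herm_frame_comb_right[OF assms(1-3)] by (cases \<tau>) (simp add: frame_coords_def)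

lemma frame_comb_frame_coords:
  assumes a: "a \<in> PuA c" and b: "b \<in> PuA c" and nz: "a \<noteq> 0" "b \<noteq> 0" and o: "herm c a b = 0"
    and y: "y \<in> Aset c"
  shows "frame_comb a b (frame_coords c a b y) = y"
proof -
  have Qa: "pure c a" and Qb: "pure c b" using a b by (simp_all add: in_PuA_iff)
  note orth = frame_orthogonality[OF Qa Qb o]
  obtain t0 t1 t2 t3 where tt: "frame_coords c a b y = (t0, t1, t2, t3)" by (metis prod.collapse)
  have coeffs: "t0 = herm c (ofC 1) y" "t1 = herm c a y / herm c a a" "t2 = herm c b y / herm c b b"
      "t3 = herm c (omul a b) y / (herm c a a * herm c b b)"
    using tt by (simp_all add: frame_coords_def)
  have "scalar4 c (t0, t1, t2, t3)" using scalar4_frame_coords tt by metis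
  note comb = herm_frame_comb_right[OF Qa Qb o this]
  define z where "z = y - frame_comb a b (t0, t1, t2, t3)"
  have "herm c (ofC 1) z = 0" unfolding z_def herm_diff_right comb by (simp add: coeffs)
  then have "pure c z" using pure_minus_F_part[of c z] by simp
  moreover have "z \<in> Aset c" unfolding z_def using y a b by (simp add: Aset_diff Aset_frame_comb in_PuA_iff)
  ultimately have zP: "z \<in> PuA c" by (simp add: in_PuA_iff)
  have "omul a b \<in> PuA c" using a b orth(1) by (simp add: in_PuA_iff Aset_omul)
  moreover have "omul a b \<noteq> 0" using nz by (metis mult_eq_0_iff norm_eq_zero norm_omul)
  moreover have "herm c a z = 0" "herm c b z = 0" "herm c (omul a b) z = 0"
    unfolding z_def herm_diff_right comb using nz by (simp_all add: coeffs)
  ultimately have "z = 0" using PuA_orthogonal_frame_complete[OF a b _ nz _ o orth(3,5) zP] by blast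
  then show ?thesis using tt z_def by simp
qed

lemma sharp_add: "sharp c \<phi> \<Longrightarrow> x \<in> Aset c \<Longrightarrow> y \<in> Aset c \<Longrightarrow> \<phi> (x + y) = \<phi> x + \<phi> y"
  and sharp_omul: "sharp c \<phi> \<Longrightarrow> x \<in> Aset c \<Longrightarrow> y \<in> Aset c \<Longrightarrow> \<phi> (omul x y) = omul (\<phi> x) (\<phi> y)"
  and sharp_herm: "sharp c \<phi> \<Longrightarrow> x \<in> Aset c \<Longrightarrow> y \<in> Aset c \<Longrightarrow> herm c (\<phi> x) (\<phi> y) = herm c x y"
  by (simp_all add: sharp_def ip_eq_ofC_herm)

lemma sharp_outside: "sharp c \<phi> \<Longrightarrow> x \<notin> Aset c \<Longrightarrow> \<phi> x = 0"
  unfolding sharp_def by blast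

lemma sharp_cscale: "sharp c \<phi> \<Longrightarrow> x \<in> Aset c \<Longrightarrow> scalar c t \<Longrightarrow> \<phi> (cscale x t) = cscale (\<phi> x) t"
  unfolding sharp_def cscale_def ofC_in_Fsc_iff [symmetric] by blast

lemma sharp_norm: assumes "sharp c \<phi>" "x \<in> Aset c" shows "norm (\<phi> x) = norm x"
proof -
  have "complex_of_real ((norm (\<phi> x))\<^sup>2) = complex_of_real ((norm x)\<^sup>2)"
    using sharp_herm[OF assms assms(2)] by (simp only: herm_self)
  then have "(norm (\<phi> x))\<^sup>2 = (norm x)\<^sup>2" by (simp only: of_real_eq_iff)
  then show ?thesis by simp
qed

lemma sharp_one: assumes "sharp c \<phi>" shows "\<phi> (ofC 1) = ofC 1"
proof -
  define u where "u = \<phi> (ofC 1)"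
  have "omul u u = u" using sharp_omul[OF assms Aset_ofC Aset_ofC, of 1 1] by (simp add: u_def omul_ofC_ofC)
  then have "omul u (u - ofC 1) = 0" by (simp add: omul_diff_right cscale_def [symmetric])
  moreover have "norm u = 1" using sharp_norm[OF assms Aset_ofC, of 1] by (simp add: u_def ofC_def norm_Pair)
  ultimately have "norm (u - ofC 1) = 0" by (metis mult_1 norm_omul norm_zero)
  then have "u - ofC 1 = 0" by simp
  then show ?thesis by (simp add: u_def)
qed

lemma sharp_ofC: "sharp c \<phi> \<Longrightarrow> scalar c t \<Longrightarrow> \<phi> (ofC t) = ofC t"
  by (metis Aset_ofC ofC_eq_cscale_one sharp_one sharp_cscale)

lemma sharp_pure: assumes "sharp c \<phi>" "x \<in> PuA c" shows "pure c (\<phi> x)"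
proof -
  have x: "x \<in> Aset c" "pure c x" using assms(2) by (simp_all add: in_PuA_iff)
  have "herm c (ofC 1) (\<phi> x) = herm c (\<phi> (ofC 1)) (\<phi> x)" using sharp_one[OF assms(1)] by simp
  also have "\<dots> = 0" using sharp_herm[OF assms(1) Aset_ofC x(1)] herm_ofC_pure[OF x(2), of 1] by simp
  finally show ?thesis using pure_minus_F_part[of c "\<phi> x"] by simp
qed

lemma sharp_frame_comb:
  assumes "sharp c \<phi>" "a \<in> Aset c" "b \<in> Aset c" "scalar4 c \<tau>"
  shows "\<phi> (frame_comb a b \<tau>) = frame_comb (\<phi> a) (\<phi> b) \<tau>"
proof (cases \<tau>)
  case (fields t0 t1 t2 t3)
  have ft: "scalar c t0" "scalar c t1" "scalar c t2" "scalar c t3" using assms(4) fields by (simp_all add: scalar4_def)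
  have ab: "omul a b \<in> Aset c" using assms(2,3) by (rule Aset_omul)
  have in_A: "ofC t0 \<in> Aset c" "cscale a t1 \<in> Aset c" "cscale b t2 \<in> Aset c" "cscale (omul a b) t3 \<in> Aset c"
    using assms(2,3) ab by (simp_all add: Aset_ofC Aset_cscale)
  have "\<phi> (ofC t0 + cscale a t1 + cscale b t2 + cscale (omul a b) t3) =
      \<phi> (ofC t0) + \<phi> (cscale a t1) + \<phi> (cscale b t2) + \<phi> (cscale (omul a b) t3)"
    using in_A sharp_add[OF assms(1)] Aset_add by metis
  also have "\<dots> = ofC t0 + cscale (\<phi> a) t1 + cscale (\<phi> b) t2 + cscale (omul (\<phi> a) (\<phi> b)) t3"
    using sharp_ofC[OF assms(1) ft(1)] sharp_cscale[OF assms(1) assms(2) ft(2)]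
      sharp_cscale[OF assms(1) assms(3) ft(3)] sharp_cscale[OF assms(1) ab ft(4)]
      sharp_omul[OF assms(1) assms(2,3)] by simp
  finally show ?thesis unfolding fields frame_comb_def by simp
qed

lemma sharp_eq_on_frame:
  assumes "sharp c \<phi>" "sharp c \<psi>" "a \<in> PuA c" "b \<in> PuA c" "a \<noteq> 0" "b \<noteq> 0" "herm c a b = 0"
    and "\<phi> a = \<psi> a" "\<phi> b = \<psi> b"
  shows "\<phi> = \<psi>"
proof
  fix y
  have ab: "a \<in> Aset c" "b \<in> Aset c" using assms(3,4) by (simp_all add: in_PuA_iff)
  show "\<phi> y = \<psi> y"
  proof (cases "y \<in> Aset c")
    case True
    have "\<phi> y = \<phi> (frame_comb a b (frame_coords c a b y))" using frame_comb_frame_coords[OF assms(3-7) True] by simp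
    also have "\<dots> = frame_comb (\<phi> a) (\<phi> b) (frame_coords c a b y)"
      by (rule sharp_frame_comb[OF assms(1) ab scalar4_frame_coords])
    also have "\<dots> = \<psi> (frame_comb a b (frame_coords c a b y))"
      using sharp_frame_comb[OF assms(2) ab scalar4_frame_coords] assms(8,9) by simp
    also have "\<dots> = \<psi> y" using frame_comb_frame_coords[OF assms(3-7) True] by simp
    finally show ?thesis .
  qed (metis assms(1,2) sharp_outside)
qed

lemma sharp_exists_on_frame:
  assumes a: "a \<in> PuA c" and b: "b \<in> PuA c" and nz: "a \<noteq> 0" "b \<noteq> 0" and o: "herm c a b = 0"
    and Qu: "pure c u" and Qw: "pure c w" and ou: "herm c u w = 0"
    and nu: "norm u = norm a" and nw: "norm w = norm b"
  obtains \<phi> where "sharp c \<phi>" "\<phi> a = u" "\<phi> b = w"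
proof -
  have Qa: "pure c a" and Qb: "pure c b" and aA: "a \<in> Aset c" and bA: "b \<in> Aset c"
    using a b by (simp_all add: in_PuA_iff)
  define \<phi> where "\<phi> y = (if y \<in> Aset c then frame_comb u w (frame_coords c a b y) else 0)" for y
  have decomp: "frame_comb a b (frame_coords c a b y) = y" if y: "y \<in> Aset c" for y
    using frame_comb_frame_coords[OF a b nz o y] .
  have coords: "scalar4 c (frame_coords c a b y)" for y by (rule scalar4_frame_coords)
  have add: "\<phi> (x + y) = \<phi> x + \<phi> y" if xy: "x \<in> Aset c" "y \<in> Aset c" for x y
    using xy by (simp add: \<phi>_def Aset_add frame_coords_add frame_comb_add)
  have scale: "\<phi> (omul x t) = omul (\<phi> x) t" if x: "x \<in> Aset c" and t: "t \<in> Fsc c" for x t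
  proof -
    obtain z where z: "t = ofC z" "scalar c z" using t by (auto simp: Fsc_eq)
    obtain t0 t1 t2 t3 where tt: "frame_coords c a b x = (t0, t1, t2, t3)" by (metis prod.collapse)
    have "\<phi> (cscale x z) = cscale (\<phi> x) z"
      using x z(2) tt by (simp add: \<phi>_def Aset_cscale frame_coords_cscale frame_comb_cscale)
    then show ?thesis using z by (simp add: cscale_def)
  qed
  have norms: "of_real ((norm u)\<^sup>2) = (of_real ((norm a)\<^sup>2) :: complex)"
    "of_real ((norm w)\<^sup>2) = (of_real ((norm b)\<^sup>2) :: complex)" "herm c u u = herm c a a" "herm c w w = herm c b b"
    using nu nw by (simp_all add: herm_self)
  have mult: "\<phi> (omul x y) = omul (\<phi> x) (\<phi> y)" if xy: "x \<in> Aset c" "y \<in> Aset c" for x y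
  proof -
    define m where "m = frame_prod (of_real ((norm a)\<^sup>2)) (of_real ((norm b)\<^sup>2)) (frame_coords c a b x) (frame_coords c a b y)"
    have comb_prod: "omul (frame_comb f1 f2 (frame_coords c a b x)) (frame_comb f1 f2 (frame_coords c a b y)) =
        frame_comb f1 f2 m" if f: "pure c f1" "pure c f2" "herm c f1 f2 = 0"
        "norm f1 = norm a" "norm f2 = norm b" for f1 f2
      using frame_comb_omul[OF f(1-3) coords coords] f(4,5) by (simp add: m_def)
    have "scalar4 c m" unfolding m_def by (rule scalar4_frame_prod[OF coords coords]) (simp_all del: of_real_power)
    then have "frame_coords c a b (omul x y) = m"
      using comb_prod[OF Qa Qb o refl refl] decomp xy frame_coords_frame_comb[OF Qa Qb o nz] by metis
    then show ?thesis
      using xy comb_prod[OF Qu Qw ou nu nw] by (simp add: \<phi>_def Aset_omul)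
  qed
  have herm: "herm c (\<phi> x) (\<phi> y) = herm c x y" if xy: "x \<in> Aset c" "y \<in> Aset c" for x y
  proof -
    obtain t0 t1 t2 t3 where tt: "frame_coords c a b x = (t0, t1, t2, t3)" by (metis prod.collapse)
    obtain s0 s1 s2 s3 where ss: "frame_coords c a b y = (s0, s1, s2, s3)" by (metis prod.collapse)
    have "herm c (\<phi> x) (\<phi> y) = herm c (frame_comb u w (t0, t1, t2, t3)) (frame_comb u w (s0, s1, s2, s3))"
      using xy tt ss by (simp add: \<phi>_def)
    also have "\<dots> = herm c (frame_comb a b (t0, t1, t2, t3)) (frame_comb a b (s0, s1, s2, s3))"
      using coords[of x] coords[of y] tt ss
      by (simp add: herm_frame_comb[OF Qu Qw ou] herm_frame_comb[OF Qa Qb o] norms)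
    also have "\<dots> = herm c x y" using decomp xy tt ss by metis
    finally show ?thesis .
  qed
  have "sharp c \<phi>"
    unfolding sharp_def ip_eq_ofC_herm using add scale mult herm by (auto simp: \<phi>_def)
  moreover have "frame_coords c a b a = (0, 1, 0, 0)" "frame_coords c a b b = (0, 0, 1, 0)"
    using herm_ofC_pure[OF Qa, of 1] herm_ofC_pure[OF Qb, of 1] frame_orthogonality[OF Qa Qb o] o nz
    by (simp_all add: frame_coords_def herm_eq_0_commute)
  then have "\<phi> a = u" "\<phi> b = w" using aA bA by (simp_all add: \<phi>_def frame_comb_def)
  ultimately show ?thesis by (rule that)
qed

section \<open>Points, lines and planes in coordinates\<close>

lemma line_eq_cscale: "line c x u = {(cscale x z, cscale u z) | z. scalar c z \<and> z \<noteq> 0}"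
  unfolding line_def Fsc_eq cscale_def by (auto simp del: split_paired_Ex split_paired_All)

lemma pt_eq_cscale: "pt c y = {cscale y z | z. scalar c z}"
  unfolding pt_def Fsc_eq cscale_def by (auto simp del: split_paired_Ex split_paired_All)

lemma line_eq_imp_cscale:
  assumes "line c x u = line c x' u'"
  obtains z where "scalar c z" "z \<noteq> 0" "x' = cscale x z" "u' = cscale u z"
proof -
  have "(x', u') \<in> line c x u" using assms by (force simp: line_eq_cscale intro: exI[of _ 1])
  then show ?thesis using that by (auto simp: line_eq_cscale)
qed

lemma pt_eq_imp_cscale:
  assumes "pt c y = pt c y'"
  obtains z where "scalar c z" "y = cscale y' z"
proof -
  have "y \<in> pt c y'" using assms by (force simp: pt_eq_cscale intro: exI[of _ 1])
  then show ?thesis using that by (auto simp: pt_eq_cscale)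
qed

lemma line_cscale: assumes "scalar c z" "z \<noteq> 0" shows "line c (cscale x z) (cscale u z) = line c x u"
proof -
  have "{(cscale (cscale x z) s, cscale (cscale u z) s) | s. scalar c s \<and> s \<noteq> 0} =
      {(cscale x s, cscale u s) | s. scalar c s \<and> s \<noteq> 0}"
  proof (intro set_eqI iffI)
    fix y assume "y \<in> {(cscale (cscale x z) s, cscale (cscale u z) s) | s. scalar c s \<and> s \<noteq> 0}"
    then obtain s where "y = (cscale (cscale x z) s, cscale (cscale u z) s)" "scalar c s" "s \<noteq> 0" by auto
    then show "y \<in> {(cscale x s, cscale u s) | s. scalar c s \<and> s \<noteq> 0}"
      using assms by (auto simp: cscale_cscale intro!: exI[of _ "z * s"] scalar_mult)
  next
    fix y assume "y \<in> {(cscale x s, cscale u s) | s. scalar c s \<and> s \<noteq> 0}"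
    then obtain s where y: "y = (cscale x s, cscale u s)" "scalar c s" "s \<noteq> 0" by auto
    then show "y \<in> {(cscale (cscale x z) s, cscale (cscale u z) s) | s. scalar c s \<and> s \<noteq> 0}"
      using assms by (auto simp: cscale_cscale intro!: exI[of _ "s / z"] scalar_divide)
  qed
  then show ?thesis unfolding line_eq_cscale .
qed

lemma pt_cscale: assumes "scalar c z" "z \<noteq> 0" shows "pt c (cscale y z) = pt c y"
proof -
  have "{cscale (cscale y z) s | s. scalar c s} = {cscale y s | s. scalar c s}"
  proof (intro set_eqI iffI)
    fix x assume "x \<in> {cscale (cscale y z) s | s. scalar c s}"
    then obtain s where "x = cscale (cscale y z) s" "scalar c s" by auto
    then show "x \<in> {cscale y s | s. scalar c s}"
      using assms by (auto simp: cscale_cscale intro!: exI[of _ "z * s"] scalar_mult)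
  next
    fix x assume "x \<in> {cscale y s | s. scalar c s}"
    then obtain s where x: "x = cscale y s" "scalar c s" by auto
    then show "x \<in> {cscale (cscale y z) s | s. scalar c s}"
      using assms by (auto simp: cscale_cscale intro!: exI[of _ "s / z"] scalar_divide)
  qed
  then show ?thesis unfolding pt_eq_cscale .
qed

lemma pt_neq_imp_not_cscale:
  assumes "pt c x \<noteq> pt c y" "y \<noteq> 0" "scalar c k"
  shows "y \<noteq> cscale x k"
proof
  assume y: "y = cscale x k"
  with assms(2) have "k \<noteq> 0" by auto
  with y have "pt c y = pt c x" using pt_cscale[OF assms(3)] by simp
  with assms(1) show False by simp
qed

lemma is_pointE: assumes "is_point c P" obtains y where "y \<in> PuA c" "y \<noteq> 0" "P = pt c y"
  using assms unfolding is_point_def by blast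

lemma is_lineE:
  assumes "is_line c L"
  obtains x u where "x \<in> PuA c" "pure c u" "norm x = norm u" "x \<noteq> 0" "L = line c x u"
  using assms unfolding is_line_def in_Pu_UNIV_iff by blast

lemma is_pointI: "y \<in> PuA c \<Longrightarrow> y \<noteq> 0 \<Longrightarrow> is_point c (pt c y)"
  unfolding is_point_def by blast

lemma is_lineI: "x \<in> PuA c \<Longrightarrow> pure c u \<Longrightarrow> norm x = norm u \<Longrightarrow> x \<noteq> 0 \<Longrightarrow> is_line c (line c x u)"
  unfolding is_line_def in_Pu_UNIV_iff by blast

lemma inc_pl_imp_herm_eq_0:
  assumes "inc_pl c P L" "L = line c x u" "P = pt c y"
  shows "herm c x y = 0"
proof -
  obtain x' u' y' where h: "L = line c x' u'" "P = pt c y'" "ip c x' y' = 0"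
    using assms(1) unfolding inc_pl_def by blast
  obtain z where z: "scalar c z" "z \<noteq> 0" "x' = cscale x z" using h(1) assms(2) line_eq_imp_cscale by metis
  obtain s where s: "scalar c s" "y = cscale y' s" using h(2) assms(3) pt_eq_imp_cscale by metis
  show ?thesis using h(3) z s by (simp add: ip_eq_ofC_herm herm_cscale_left herm_cscale_right)
qed

lemma inc_plI:
  "is_point c P \<Longrightarrow> is_line c L \<Longrightarrow> L = line c x u \<Longrightarrow> P = pt c y \<Longrightarrow> herm c x y = 0 \<Longrightarrow> inc_pl c P L"
  unfolding inc_pl_def ip_eq_ofC_herm by (metis ofC_0)

lemma perp_imp_herm_eq_0:
  assumes "perp c P Q" "P = pt c y" "Q = pt c y'"
  shows "herm c y y' = 0"
proof -
  obtain x0 y0 where h: "P = pt c x0" "Q = pt c y0" "ip c x0 y0 = 0" using assms(1) unfolding perp_def by blast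
  obtain s where s: "scalar c s" "y = cscale x0 s" using h(1) assms(2) pt_eq_imp_cscale by metis
  obtain s' where s': "scalar c s'" "y' = cscale y0 s'" using h(2) assms(3) pt_eq_imp_cscale by metis
  show ?thesis using h(3) s s' by (simp add: ip_eq_ofC_herm herm_cscale_right herm_cscale_left)
qed

lemma perpI: "P = pt c y \<Longrightarrow> Q = pt c y' \<Longrightarrow> herm c y y' = 0 \<Longrightarrow> perp c P Q"
  unfolding perp_def ip_eq_ofC_herm by (metis ofC_0)

lemma inc_lp_imp_eq:
  assumes "inc_lp c L \<phi>" "L = line c x u" "x \<in> Aset c"
  shows "\<phi> x = u"
proof -
  obtain x' u' where h: "sharp c \<phi>" "L = line c x' u'" "\<phi> x' = u'" using assms(1) unfolding inc_lp_def by blast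
  obtain z where z: "scalar c z" "z \<noteq> 0" "x' = cscale x z" "u' = cscale u z"
    using h(2) assms(2) line_eq_imp_cscale by metis
  have "cscale (\<phi> x) z = cscale u z" using sharp_cscale[OF h(1) assms(3) z(1)] h(3) z by simp
  then have "cscale (cscale (\<phi> x) z) (1 / z) = cscale (cscale u z) (1 / z)" by simp
  then show ?thesis using z(2) by (simp add: cscale_cscale)
qed

lemma inc_lpI: "is_line c L \<Longrightarrow> sharp c \<phi> \<Longrightarrow> L = line c x u \<Longrightarrow> \<phi> x = u \<Longrightarrow> inc_lp c L \<phi>"
  unfolding inc_lp_def by blast

lemma linv_line_line:
  assumes "e \<noteq> 0" "X \<noteq> 0" "Y \<noteq> 0"
  shows "linv c (line c e X) (line c e Y) = ofC (of_real (1 / (norm X * norm Y)) * herm c X Y)"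
  unfolding linv_def
proof (rule some_equality)
  show "\<exists>a u v. line c e X = line c a u \<and> line c e Y = line c a v \<and>
      ofC (of_real (1 / (norm X * norm Y)) * herm c X Y) = scaleR (1 / (norm u * norm v)) (ip c u v)"
    by (rule exI[of _ e], rule exI[of _ X], rule exI[of _ Y]) (simp add: ip_eq_ofC_herm scaleR_ofC)
next
  fix l assume "\<exists>a u v. line c e X = line c a u \<and> line c e Y = line c a v \<and>
      l = scaleR (1 / (norm u * norm v)) (ip c u v)"
  then obtain a u v where h: "line c e X = line c a u" "line c e Y = line c a v"
    "l = scaleR (1 / (norm u * norm v)) (ip c u v)" by blast
  obtain z where z: "scalar c z" "z \<noteq> 0" "a = cscale e z" "u = cscale X z" using h(1) line_eq_imp_cscale by metis
  obtain z' where z': "scalar c z'" "z' \<noteq> 0" "a = cscale e z'" "v = cscale Y z'" using h(2) line_eq_imp_cscale by metis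
  have "z' = z" using cscale_left_cancel[OF assms(1)] z z' by metis
  moreover have "cnj z * z = of_real ((cmod z)\<^sup>2)" by (metis complex_norm_square mult.commute)
  ultimately show "l = ofC (of_real (1 / (norm X * norm Y)) * herm c X Y)"
    using h(3) z z' assms(2,3)
    by (simp add: norm_cscale ip_eq_ofC_herm herm_cscale_left herm_cscale_right scaleR_ofC field_simps power2_eq_square)
qed

lemma the_plane_on_frame:
  assumes \<xi>: "sharp c \<xi>" "\<xi> a = u" "\<xi> b = w"
    and ab: "a \<in> PuA c" "b \<in> PuA c" "a \<noteq> 0" "b \<noteq> 0" "herm c a b = 0"
    and lines: "is_line c (line c a u)" "is_line c (line c b w)"
  shows "(THE \<xi>'. inc_lp c (line c b w) \<xi>' \<and> inc_lp c (line c a u) \<xi>') = \<xi>"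
proof (rule the_equality)
  show "inc_lp c (line c b w) \<xi> \<and> inc_lp c (line c a u) \<xi>"
    using inc_lpI[OF lines(2) \<xi>(1) refl \<xi>(3)] inc_lpI[OF lines(1) \<xi>(1) refl \<xi>(2)] by blast
next
  fix \<xi>' assume \<xi>': "inc_lp c (line c b w) \<xi>' \<and> inc_lp c (line c a u) \<xi>'"
  then have "sharp c \<xi>'" by (simp add: inc_lp_def)
  moreover have "\<xi>' a = u" "\<xi>' b = w"
    using \<xi>' inc_lp_imp_eq[of c _ \<xi>'] ab(1,2) by (simp_all add: in_PuA_iff)
  ultimately show "\<xi>' = \<xi>" using sharp_eq_on_frame[OF _ \<xi>(1) ab] \<xi>(2,3) by simp
qed

lemma the_line_on_plane:
  assumes \<phi>: "sharp c \<phi>" and in_PuA: "a \<in> PuA c" "p0 \<in> PuA c" "e \<in> PuA c"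
    and nz: "a \<noteq> 0" "p0 \<noteq> 0" "e \<noteq> 0"
    and orth: "herm c a p0 = 0" "herm c a e = 0" "herm c p0 e = 0"
  shows "(THE L'. inc_lp c L' \<phi> \<and> inc_pl c (pt c p0) L' \<and> inc_pl c (pt c a) L') = line c e (\<phi> e)"
proof (rule the_equality)
  have eA: "e \<in> Aset c" using in_PuA(3) by (simp add: in_PuA_iff)
  have line: "is_line c (line c e (\<phi> e))"
    using is_lineI[OF in_PuA(3) sharp_pure[OF \<phi> in_PuA(3)] _ nz(3)] sharp_norm[OF \<phi> eA] by simp
  show "inc_lp c (line c e (\<phi> e)) \<phi> \<and> inc_pl c (pt c p0) (line c e (\<phi> e)) \<and> inc_pl c (pt c a) (line c e (\<phi> e))"
    using inc_lpI[OF line \<phi> refl refl] orth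
      inc_plI[OF is_pointI[OF in_PuA(2) nz(2)] line refl refl]
      inc_plI[OF is_pointI[OF in_PuA(1) nz(1)] line refl refl]
    by (simp add: herm_eq_0_commute)
next
  fix L' assume L': "inc_lp c L' \<phi> \<and> inc_pl c (pt c p0) L' \<and> inc_pl c (pt c a) L'"
  then have "is_line c L'" by (simp add: inc_lp_def)
  then obtain x u where x: "x \<in> PuA c" "x \<noteq> 0" "L' = line c x u" by (rule is_lineE)
  then have "herm c p0 x = 0" "herm c a x = 0"
    using L' inc_pl_imp_herm_eq_0 herm_eq_0_commute by blast+
  then obtain t where t: "scalar c t" "x = cscale e t"
    using PuA_orthogonal_to_two_multiple[of e c a p0 x] in_PuA nz orth x(1) by (metis herm_eq_0_commute)
  have "\<phi> x = u" using inc_lp_imp_eq[of c L' \<phi> x u] L' x(1,3) by (simp add: in_PuA_iff)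
  then have "L' = line c (cscale e t) (cscale (\<phi> e) t)"
    using x(3) t sharp_cscale[OF \<phi> _ t(1)] in_PuA(3) by (simp add: in_PuA_iff)
  moreover have "t \<noteq> 0" using t x(2) by auto
  ultimately show "L' = line c e (\<phi> e)" using line_cscale t(1) by simp
qed

lemma linv_ne_minus_one:
  assumes \<xi>: "sharp c \<xi>" and \<psi>: "sharp c \<psi>" and "b \<in> Aset c" "e \<in> Aset c" "e \<noteq> 0"
    and "\<xi> b = \<psi> b" "herm c b e \<noteq> 0"
  shows "linv c (line c e (\<xi> e)) (line c e (\<psi> e)) \<noteq> ofR (-1)"
proof
  define X Y where "X = \<xi> e" and "Y = \<psi> e"
  have norms: "norm X = norm e" "norm Y = norm e" unfolding X_def Y_def using sharp_norm \<xi> \<psi> assms(4) by blast+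
  have nz: "X \<noteq> 0" "Y \<noteq> 0" using norms assms(5) by auto
  assume "linv c (line c e (\<xi> e)) (line c e (\<psi> e)) = ofR (-1)"
  then have "ofC (of_real (1 / (norm e * norm e)) * herm c X Y) = ofC (-1)"
    using linv_line_line[OF assms(5) nz, of c] norms by (simp add: X_def Y_def ofR_def)
  then have XY: "herm c X Y = - of_real (norm e * norm e)" using assms(5) by (simp add: field_simps)
  have "herm c (X + Y) (X + Y) = herm c X X + herm c X Y + (herm c Y X + herm c Y Y)"
    by (simp add: herm_add_left herm_add_right)
  also have "\<dots> = 0" using XY herm_commute[of c Y X] norms by (simp add: herm_self power2_eq_square)
  finally have "Y = - X" by (simp add: eq_neg_iff_add_eq_0 add.commute)
  moreover have "herm c (\<xi> b) X = herm c b e" "herm c (\<psi> b) Y = herm c b e"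
    unfolding X_def Y_def using sharp_herm \<xi> \<psi> assms(3,4) by blast+
  ultimately have "herm c b e = - herm c b e" using assms(6) by (simp add: herm_minus_right)
  then show False using assms(7) by simp
qed

lemma pure_orthogonal_exists:
  assumes "r \<ge> 0"
  obtains w where "pure c w" "herm c u w = 0" "herm c v w = 0" "norm w = r"
proof -
  define S where "S = set [ofC 1, ofC \<i>, u, cscale u \<i>, v, cscale v \<i>]"
  have "finite S" by (simp add: S_def)
  then have "dim S \<le> card S" using dim_le_card[OF span_superset] by blast
  also have "card S \<le> 6" unfolding S_def using card_length[of "[ofC 1, ofC \<i>, u, cscale u \<i>, v, cscale v \<i>]"] by simp
  finally have "dim S < DIM(oct)" by simp
  then obtain w0 where w0: "w0 \<noteq> 0" "\<And>y. y \<in> span S \<Longrightarrow> orthogonal w0 y"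
    using orthogonal_to_subspace_exists by blast
  have orth: "inner y w0 = 0" if "y \<in> S" for y
    using w0(2) span_base that by (metis orthogonal_def inner_commute)
  have "inner (ofC 1) w0 = 0" "inner (ofC \<i>) w0 = 0" using orth by (auto simp: S_def)
  then have "fst (fst w0) = 0" by (cases w0 rule: oct_cases) (simp add: ofC_def inner_complex_def complex_eq_iff)
  then have "pure c w0" by (cases c) (simp_all add: pure_def)
  moreover have "herm c u w0 = 0" "herm c v w0 = 0"
    using orth by (intro herm_eq_0_if_inner; simp add: S_def)+
  ultimately show ?thesis
  proof (intro that[of "cscale w0 (of_real (r / norm w0))"])
    show "norm (cscale w0 (of_real (r / norm w0))) = r"
      using w0(1) assms by (simp add: norm_cscale norm_divide)
  qed (simp_all add: pure_cscale herm_cscale_right scalar_divide)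
qed

section \<open>Non-orthogonal primitive paths\<close>

lemma rejection_nonzero: "y \<noteq> 0 \<Longrightarrow> pt c x \<noteq> pt c y \<Longrightarrow> rejection c x y \<noteq> 0"
  using rejection_eq_0_imp pt_neq_imp_not_cscale by metis

lemma herm_rejection_rejection:
  assumes "x \<noteq> 0" "y \<noteq> 0" "pt c x \<noteq> pt c y" "herm c x y \<noteq> 0"
  shows "herm c (rejection c y x) (rejection c x y) \<noteq> 0"
proof -
  define b k k' where "b = rejection c y x" and "k = herm c x y / herm c x x" and "k' = herm c y x / herm c y y"
  have "b \<noteq> 0" unfolding b_def using assms(1,3) rejection_nonzero by metis
  have scalars: "scalar c k" "scalar c k'" by (simp_all add: k_def k'_def scalar_herm_quotient)
  have "herm c b y = 0" unfolding b_def using assms(2) herm_rejection_self herm_eq_0_commute by metis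
  moreover have "x = b + cscale y k'" by (simp add: b_def k'_def rejection_def)
  then have "herm c b x = herm c b b" using \<open>herm c b y = 0\<close> scalars by (simp add: herm_add_right herm_cscale_right)
  ultimately have "herm c b (rejection c x y) = - (herm c b b * k)"
    by (simp add: rejection_def herm_diff_right herm_cscale_right scalars flip: k_def)
  moreover have "k \<noteq> 0" using assms(1,4) by (simp add: k_def)
  ultimately show ?thesis using \<open>b \<noteq> 0\<close> by (simp add: b_def)
qed

lemma primitive_path_coords:
  assumes "primitive c p L q M" "p \<noteq> q"
  obtains p0 q0 a u v where "p0 \<in> PuA c" "q0 \<in> PuA c" "a \<in> PuA c" "p0 \<noteq> 0" "q0 \<noteq> 0" "a \<noteq> 0"
    "pure c u" "pure c v" "norm u = norm a" "norm v = norm a" "herm c a p0 = 0" "herm c a q0 = 0"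
    "p = pt c p0" "q = pt c q0" "L = line c a u" "M = line c a v"
proof -
  have path: "is_point c p" "is_point c q" "is_line c L" "is_line c M" "inc_pl c p L" "inc_pl c q L"
    "inc_pl c q M" "inc_pl c p M" using assms(1) unfolding primitive_def by blast+
  obtain p0 where p0: "p0 \<in> PuA c" "p0 \<noteq> 0" "p = pt c p0" using path(1) by (rule is_pointE)
  obtain q0 where q0: "q0 \<in> PuA c" "q0 \<noteq> 0" "q = pt c q0" using path(2) by (rule is_pointE)
  obtain a u where L: "a \<in> PuA c" "pure c u" "norm a = norm u" "a \<noteq> 0" "L = line c a u"
    using path(3) by (rule is_lineE)
  obtain a' v' where M: "a' \<in> PuA c" "pure c v'" "norm a' = norm v'" "a' \<noteq> 0" "M = line c a' v'"
    using path(4) by (rule is_lineE)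
  have orth: "herm c a p0 = 0" "herm c a q0 = 0" "herm c a' p0 = 0" "herm c a' q0 = 0"
    using inc_pl_imp_herm_eq_0 path(5-8) L(5) M(5) p0(3) q0(3) by blast+
  define e where "e = rejection c p0 q0"
  have e: "e \<in> PuA c" "e \<noteq> 0" "herm c p0 e = 0" "herm c a e = 0" "herm c a' e = 0"
    using rejection_in_PuA[OF p0(1) q0(1)] rejection_nonzero[OF q0(2)] assms(2) p0(2,3) q0(3)
      herm_rejection_self herm_rejection orth by (simp_all add: e_def)
  obtain t where t: "scalar c t" "a' = cscale a t"
    using PuA_orthogonal_to_two_multiple[OF L(1) p0(1) e(1) L(4) p0(2) e(2) orth(1) e(4,3) M(1)]
      orth(3) e(5) herm_eq_0_commute by metis
  have "t \<noteq> 0" using t M(4) by auto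
  define v where "v = cscale v' (1 / t)"
  have "M = line c a v"
    using M(5) t line_cscale[OF t(1) \<open>t \<noteq> 0\<close>, of a v] \<open>t \<noteq> 0\<close> by (simp add: v_def cscale_cscale)
  moreover have "pure c v" using M(2) t(1) by (simp add: v_def pure_cscale scalar_divide)
  moreover have "norm v = norm a"
    using M(3) t \<open>t \<noteq> 0\<close> by (simp add: v_def norm_cscale norm_divide field_simps)
  ultimately show ?thesis using that p0 q0 L orth by metis
qed

locale nonorthogonal_path =
  fixes c :: FA and p0 q0 a u v :: oct
  assumes p0: "p0 \<in> PuA c" "p0 \<noteq> 0" and q0: "q0 \<in> PuA c" "q0 \<noteq> 0" and a: "a \<in> PuA c" "a \<noteq> 0"
    and u: "pure c u" "norm u = norm a" and v: "pure c v" "norm v = norm a"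
    and a_orth: "herm c a p0 = 0" "herm c a q0 = 0"
    and distinct: "pt c p0 \<noteq> pt c q0" and nonorthogonal: "herm c p0 q0 \<noteq> 0"
begin

definition b :: oct where "b = rejection c q0 p0"

definition e :: oct where "e = rejection c p0 q0"

lemma b_props: "b \<in> PuA c" "b \<noteq> 0" "herm c a b = 0" "herm c b a = 0" "herm c b q0 = 0"
  using rejection_in_PuA[OF q0(1) p0(1)] rejection_nonzero[OF p0(2)] distinct q0(2)
    herm_rejection_self herm_rejection a_orth herm_eq_0_commute
  unfolding b_def by metis+

lemma e_props: "e \<in> PuA c" "e \<noteq> 0" "herm c a e = 0" "herm c p0 e = 0"
  using rejection_in_PuA[OF p0(1) q0(1)] rejection_nonzero[OF q0(2)] distinct p0(2)
    herm_rejection_self herm_rejection a_orth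
  unfolding e_def by metis+

lemma herm_b_e: "herm c b e \<noteq> 0"
  unfolding b_def e_def using herm_rejection_rejection[OF p0(2) q0(2) distinct nonorthogonal] .

lemma the_orthogonal_point:
  assumes N: "is_line c (line c b w)"
  shows "(THE r. inc_pl c r (line c b w) \<and> perp c (pt c p0) r) = pt c a"
proof (rule the_equality)
  show "inc_pl c (pt c a) (line c b w) \<and> perp c (pt c p0) (pt c a)"
    using inc_plI[OF is_pointI[OF a] N refl refl b_props(4)] perpI[OF refl refl] a_orth herm_eq_0_commute by blast
next
  fix r assume r: "inc_pl c r (line c b w) \<and> perp c (pt c p0) r"
  then obtain y where y: "y \<in> PuA c" "y \<noteq> 0" "r = pt c y" by (auto simp: inc_pl_def elim: is_pointE)
  have "herm c b y = 0" "herm c p0 y = 0"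
    using r y(3) inc_pl_imp_herm_eq_0 perp_imp_herm_eq_0 by blast+
  moreover define k where "k = herm c q0 p0 / herm c q0 q0"
  have "scalar c k" by (simp add: k_def scalar_herm_quotient)
  then have "herm c b y = herm c p0 y - cnj k * herm c q0 y"
    by (simp add: b_def rejection_def herm_diff_left herm_cscale_left flip: k_def)
  moreover have "k \<noteq> 0" using nonorthogonal q0(2) herm_commute[of c q0 p0] by (simp add: k_def)
  ultimately have "herm c q0 y = 0" by simp
  then obtain s where s: "scalar c s" "y = cscale a s"
    using PuA_orthogonal_to_two_multiple[OF a(1) b_props(1) q0(1) a(2) b_props(2) q0(2) b_props(3) a_orth(2) b_props(5) y(1)]
      \<open>herm c b y = 0\<close> by metis
  then show "r = pt c a" using y(2,3) pt_cscale by auto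
qed

theorem admissible_orth_shift_linv:
  "\<exists>N. admissible c (pt c p0) (line c a u) (pt c q0) (line c a v) N \<and>
     (case orth_shift c (pt c p0) (line c a u) (pt c q0) (line c a v) N of
        (L', r, M') \<Rightarrow> linv c L' M' \<noteq> ofR (-1))"
proof -
  obtain w where w: "pure c w" "herm c u w = 0" "herm c v w = 0" "norm w = norm b"
    by (rule pure_orthogonal_exists[OF norm_ge_zero])
  obtain \<xi> where \<xi>: "sharp c \<xi>" "\<xi> a = u" "\<xi> b = w"
    using sharp_exists_on_frame[OF a(1) b_props(1) a(2) b_props(2,3) u(1) w(1,2) u(2) w(4)] .
  obtain \<psi> where \<psi>: "sharp c \<psi>" "\<psi> a = v" "\<psi> b = w"
    using sharp_exists_on_frame[OF a(1) b_props(1) a(2) b_props(2,3) v(1) w(1,3) v(2) w(4)] .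
  have lines: "is_line c (line c a u)" "is_line c (line c a v)" "is_line c (line c b w)"
    using is_lineI a b_props(1,2) u v w(1,4) by metis+
  have "admissible c (pt c p0) (line c a u) (pt c q0) (line c a v) (line c b w)"
    unfolding admissible_def coplanar_def
    using lines inc_plI[OF is_pointI[OF q0] lines(3) refl refl b_props(5)]
      inc_lpI[OF _ \<xi>(1)] inc_lpI[OF _ \<psi>(1)] \<xi> \<psi> by blast
  moreover have "orth_shift c (pt c p0) (line c a u) (pt c q0) (line c a v) (line c b w) =
      (line c e (\<xi> e), pt c a, line c e (\<psi> e))"
    unfolding orth_shift_def shift_def Let_def the_orthogonal_point[OF lines(3)]
      the_plane_on_frame[OF \<xi> a(1) b_props(1) a(2) b_props(2,3) lines(1,3)]
      the_plane_on_frame[OF \<psi> a(1) b_props(1) a(2) b_props(2,3) lines(2,3)]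
      the_line_on_plane[OF \<xi>(1) a(1) p0(1) e_props(1) a(2) p0(2) e_props(2) a_orth(1) e_props(3,4)]
      the_line_on_plane[OF \<psi>(1) a(1) p0(1) e_props(1) a(2) p0(2) e_props(2) a_orth(1) e_props(3,4)] ..
  moreover have "linv c (line c e (\<xi> e)) (line c e (\<psi> e)) \<noteq> ofR (-1)"
    using linv_ne_minus_one[OF \<xi>(1) \<psi>(1) _ _ e_props(2) _ herm_b_e] b_props(1) e_props(1) \<xi>(3) \<psi>(3)
    by (simp add: in_PuA_iff)
  ultimately show ?thesis by auto
qed

end

theorem mainTheorem12:
  fixes c :: FA and p q :: "oct set" and L M :: "(oct \<times> oct) set"
  assumes "primitive c p L q M"
    and "\<not> degenerate p L q M"
    and "\<not> perp c p q"
  shows "\<exists>N. admissible c p L q M N \<and>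
           (case orth_shift c p L q M N of (L', r, M') \<Rightarrow> linv c L' M' \<noteq> ofR (-1))"
proof -
  have "p \<noteq> q" using assms(2) by (simp add: degenerate_def)
  then obtain p0 q0 a u v where coords: "p0 \<in> PuA c" "q0 \<in> PuA c" "a \<in> PuA c" "p0 \<noteq> 0" "q0 \<noteq> 0" "a \<noteq> 0"
    "pure c u" "pure c v" "norm u = norm a" "norm v = norm a" "herm c a p0 = 0" "herm c a q0 = 0"
    and path: "p = pt c p0" "q = pt c q0" "L = line c a u" "M = line c a v"
    using primitive_path_coords[OF assms(1)] by blast
  have "herm c p0 q0 \<noteq> 0" using assms(3) perpI path(1,2) by blast
  then interpret nonorthogonal_path c p0 q0 a u v
    using coords path \<open>p \<noteq> q\<close> by unfold_locales simp_all
  show ?thesis using admissible_orth_shift_linv unfolding path .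
qed

end
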